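(* Let $A\in\mathcal{A}_{n,1}$ and $(N,E)=\Lambda(A)$. Then $-\ell(N)\le B(A)\le c(N)$.
   Context: An alternating sign matrix (ASM) of order $n$ is an $n\times n$ matrix $A=(a_{ij})$ with entries in $\{-1,0,1\}$ such that in every row and every column the nonzero entries alternate in sign, the first and the last nonzero entries being $1$. $\mathcal{A}_{n,s}$ denotes the set of order-$n$ ASMs having exactly $s$ entries equal to $-1$ (so $\mathcal{A}_{n,0}$ is the set of $n\times n$ permutation matrices). For an ASM $A=(a_{ij})$, $\overline{A}=(a_{i,n+1-j})$ is the vertical reflection of $A$. Let $A\in\mathcal{A}_{n,1}$. The opening column is the column containing the unique $-1$; the closing row is the row containing the $-1$; the opening row is the row of the $1$ of the opening column lying above the $-1$. The columns strictly to the left (resp. right) of the opening column form the left side (resp. right side). The closing row contains exactly two $1$'s, one in each side; the one in the right side is the closing $1$ and its column is the closing column. The rows strictly between the opening row and the closing row are the enclosed rows. $A$ is neutral if there are no enclosed rows; otherwise $A$ is positive if the $1$ of the lowest enclosed row lies in the right side, and negative if it lies in the left side. $\mathcal{A}_{n,1}^{+},\mathcal{A}_{n,1}^{0},\mathcal{A}_{n,1}^{-}$ denote the sets of positive, neutral, negative elements of $\mathcal{A}_{n,1}$; $A$ is negative iff $\overline{A}$ is positive. For $A\in\mathcal{A}_{n,1}^{+}\cup\mathcal{A}_{n,1}^{0}$: the charged cell is the intersection of the enclosed rows with the right side; the extended neutral cell is the intersection of the rows from the opening row to the closing row (inclusive) with the left side. The leading $1$ is the highest $1$ in the left side strictly below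 the opening row; its column is the leading column; the leading cell consists of the entries strictly below the opening row and strictly between the leading column and the opening column, and $\ell(A)$ is the sum of its entries. The closing cell consists of the entries strictly below the closing row and strictly between the opening column and the closing column, and $c(A)$ is the sum of its entries; the extended closing cell consists of the entries strictly below the closing row in the columns from the opening column to the closing column inclusive. Parameters: if $A$ is positive, $E(A)$ is the sum of the entries of the charged cell; if $A$ is neutral, $E(A)=0$; if $A$ is negative, $E(A)=-E(\overline{A})$. For $A\in\mathcal{A}_{n,1}^{+}\cup\mathcal{A}_{n,1}^{0}$, $B(A)=c(A)-\ell(A)$; for $A\in\mathcal{A}_{n,1}^{-}$, $B(A)=-B(\overline{A})$. Horizontal displacement: for an $m\times q$ $(0,1)$-matrix $P$ whose nonzero columns are $j_1<\dots<j_t$ with $j_1=1$ and $j_t<q$, $H(P)$ is the $m\times q$ matrix whose column $j_{s+1}$ equals column $j_s$ of $P$ for $1\le s\le t$ (where $j_{t+1}=q$), all other columns being zero. Vertical displacement: for an $m\times q$ $(0,1)$-matrix $P$ whose nonzero rows are $i_1<\dots<i_t$ with $i_1>1$ and $i_t=m$, $V(P)$ is the $m\times q$ matrix whose row $i_{s-1}$ equals row $i_s$ of $P$ for $1\le s\le t$ (where $i_0=1$), all other rows being zero. Partial discharging procedure: for $A\in\mathcal{A}_{n,1}^{+}\cup\mathcal{A}_{n,1}^{0}$, $\delta(A)$ is obtained by applying successively the following steps (all cells, rows and columns referring to the positions they occupy in $A$): (1) replace the $-1$ and the closing $1$ by $0$; (2) replace the submatrix occupying the extended closing cell by its image under $H$;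 (3) replace the submatrix occupying the extended neutral cell by its image under $V$; (4) lower the entries of the extended neutral cell and of the charged cell by one row: in the left side, for each row $t$ strictly below the opening row up to and including the closing row, the left part of row $t$ becomes the former left part of row $t-1$, and the left part of the opening row becomes zero; in the right side, for each row $t$ from two rows below the opening row up to and including the closing row, the right part of row $t$ becomes the former right part of row $t-1$, and the right part of the row immediately below the opening row becomes zero. The complete discharging procedure is $\Delta(A)=(k,\delta(A),c(A),E(A))$, where $k$ is the index of the opening row of $A$. It is known that $\Delta$ is injective on $\mathcal{A}_{n,1}^{+}\cup\mathcal{A}_{n,1}^{0}$, and that whenever $\Delta(A)=(k,P,c,E)$, there is a unique $N\in\mathcal{A}_{n,1}^{+}\cup\mathcal{A}_{n,1}^{0}$ with $\Delta(N)=(k,P,c+E,0)$, and this $N$ is neutral. Neutralizing procedure $\Lambda$: for $A\in\mathcal{A}_{n,1}^{+}\cup\mathcal{A}_{n,1}^{0}$ with $\Delta(A)=(k,P,c,E)$, $\Lambda(A)=(N,E)$ where $N$ is the unique element with $\Delta(N)=(k,P,c+E,0)$. For $A\in\mathcal{A}_{n,1}^{-}$, write $\Lambda(\overline{A})=(M,-E)$ and set $\Lambda(A)=(\overline{M},E)$. *)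

theory Defs
  imports Main
begin

text \<open>Matrices of order n are functions nat => nat => int, indexed by 1..n,
  and zero outside {1..n} x {1..n}.\<close>

type_synonym mat = "nat \<Rightarrow> nat \<Rightarrow> int"

definition alternating :: "int list \<Rightarrow> bool" where
  "alternating xs \<longleftrightarrow> xs \<noteq> [] \<and> hd xs = 1 \<and> last xs = 1 \<and>
     (\<forall>k. Suc k < length xs \<longrightarrow> xs ! Suc k = - (xs ! k))"

definition is_asm :: "nat \<Rightarrow> mat \<Rightarrow> bool" where
  "is_asm n A \<longleftrightarrow>
     (\<forall>i j. \<not> (1 \<le> i \<and> i \<le> n \<and> 1 \<le> j \<and> j \<le> n) \<longrightarrow> A i j = 0) \<and>
     (\<forall>i j. A i j \<in> {-1, 0, 1}) \<and>
     (\<forall>i\<in>{1..n}. alternating [A i j. j \<leftarrow> [1..<n+1], A i j \<noteq> 0]) \<and>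
     (\<forall>j\<in>{1..n}. alternating [A i j. i \<leftarrow> [1..<n+1], A i j \<noteq> 0])"

definition asm_s :: "nat \<Rightarrow> nat \<Rightarrow> mat \<Rightarrow> bool" where
  "asm_s n s A \<longleftrightarrow> is_asm n A \<and>
     card {(i, j). i \<in> {1..n} \<and> j \<in> {1..n} \<and> A i j = -1} = s"

abbreviation asm1 :: "nat \<Rightarrow> mat \<Rightarrow> bool" where
  "asm1 n A \<equiv> asm_s n 1 A"

definition refl :: "nat \<Rightarrow> mat \<Rightarrow> mat" where
  "refl n A = (\<lambda>i j. if 1 \<le> j \<and> j \<le> n then A i (n + 1 - j) else 0)"

definition neg_pos :: "mat \<Rightarrow> nat \<times> nat" where
  "neg_pos A = (THE p. A (fst p) (snd p) = -1)"

definition closing_row :: "mat \<Rightarrow> nat" where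
  "closing_row A = fst (neg_pos A)"

definition opening_col :: "mat \<Rightarrow> nat" where
  "opening_col A = snd (neg_pos A)"

definition opening_row :: "mat \<Rightarrow> nat" where
  "opening_row A = (THE i. i < closing_row A \<and> A i (opening_col A) = 1)"

definition closing_col :: "mat \<Rightarrow> nat" where
  "closing_col A = (THE j. opening_col A < j \<and> A (closing_row A) j = 1)"

definition neutral :: "nat \<Rightarrow> mat \<Rightarrow> bool" where
  "neutral n A \<longleftrightarrow> asm1 n A \<and> Suc (opening_row A) = closing_row A"

definition positive :: "nat \<Rightarrow> mat \<Rightarrow> bool" where
  "positive n A \<longleftrightarrow> asm1 n A \<and> Suc (opening_row A) < closing_row A \<and>
     (\<exists>j. opening_col A < j \<and> j \<le> n \<and> A (closing_row A - 1) j = 1)"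

definition negative :: "nat \<Rightarrow> mat \<Rightarrow> bool" where
  "negative n A \<longleftrightarrow> asm1 n A \<and> Suc (opening_row A) < closing_row A \<and>
     (\<exists>j. 1 \<le> j \<and> j < opening_col A \<and> A (closing_row A - 1) j = 1)"

definition leading_row :: "mat \<Rightarrow> nat" where
  "leading_row A = (LEAST i. opening_row A < i \<and>
      (\<exists>j. 1 \<le> j \<and> j < opening_col A \<and> A i j = 1))"

definition leading_col :: "mat \<Rightarrow> nat" where
  "leading_col A = (THE j. 1 \<le> j \<and> j < opening_col A \<and> A (leading_row A) j = 1)"

definition ell :: "nat \<Rightarrow> mat \<Rightarrow> int" where
  "ell n A = (\<Sum>i\<in>{opening_row A<..n}. \<Sum>j\<in>{leading_col A<..<opening_col A}. A i j)"

definition cval :: "nat \<Rightarrow> mat \<Rightarrow> int" where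
  "cval n A = (\<Sum>i\<in>{closing_row A<..n}. \<Sum>j\<in>{opening_col A<..<closing_col A}. A i j)"

definition charge :: "nat \<Rightarrow> mat \<Rightarrow> int" where
  "charge n A = (\<Sum>i\<in>{opening_row A<..<closing_row A}. \<Sum>j\<in>{opening_col A<..n}. A i j)"

definition Epar :: "nat \<Rightarrow> mat \<Rightarrow> int" where
  "Epar n A = (if positive n A then charge n A
               else if neutral n A then 0
               else - charge n (refl n A))"

definition Bpar :: "nat \<Rightarrow> mat \<Rightarrow> int" where
  "Bpar n A = (if negative n A then - (cval n (refl n A) - ell n (refl n A))
               else cval n A - ell n A)"

text \<open>Partial discharging procedure; all positions refer to the original A.\<close>
definition dstep1 :: "mat \<Rightarrow> mat \<Rightarrow> mat" where
  "dstep1 A M = (\<lambda>i j. if i = closing_row A \<and> (j = opening_col A \<or> j = closing_col A)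
                         then 0 else M i j)"

definition dstep2 :: "nat \<Rightarrow> mat \<Rightarrow> mat \<Rightarrow> mat" where
  "dstep2 n A M = (let r = closing_row A; c0 = opening_col A; cc = closing_col A;
      S = {j \<in> {c0..cc}. \<exists>i\<in>{r<..n}. M i j \<noteq> 0} in
      (\<lambda>i j. if r < i \<and> i \<le> n \<and> c0 \<le> j \<and> j \<le> cc then
               (if (j \<in> S \<or> j = cc) \<and> (\<exists>s\<in>S. s < j)
                then M i (GREATEST s. s \<in> S \<and> s < j) else 0)
             else M i j))"

definition dstep3 :: "mat \<Rightarrow> mat \<Rightarrow> mat" where
  "dstep3 A M = (let r = closing_row A; c0 = opening_col A; k = opening_row A;
      T = {i \<in> {k..r}. \<exists>j\<in>{1..<c0}. M i j \<noteq> 0} in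
      (\<lambda>i j. if k \<le> i \<and> i \<le> r \<and> 1 \<le> j \<and> j < c0 then
               (if (i = k \<or> i \<in> T) \<and> (\<exists>t\<in>T. i < t)
                then M (LEAST t. t \<in> T \<and> i < t) j else 0)
             else M i j))"

definition dstep4 :: "nat \<Rightarrow> mat \<Rightarrow> mat \<Rightarrow> mat" where
  "dstep4 n A M = (let r = closing_row A; c0 = opening_col A; k = opening_row A in
      (\<lambda>i j. if 1 \<le> j \<and> j < c0 \<and> k \<le> i \<and> i \<le> r then
               (if i = k then 0 else M (i - 1) j)
             else if c0 < j \<and> j \<le> n \<and> k + 1 \<le> i \<and> i \<le> r then
               (if i = k + 1 then 0 else M (i - 1) j)
             else M i j))"

definition delta :: "nat \<Rightarrow> mat \<Rightarrow> mat" where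
  "delta n A = dstep4 n A (dstep3 A (dstep2 n A (dstep1 A A)))"

definition Delta :: "nat \<Rightarrow> mat \<Rightarrow> nat \<times> mat \<times> int \<times> int" where
  "Delta n A = (opening_row A, delta n A, cval n A, Epar n A)"

definition Lambda_pn :: "nat \<Rightarrow> mat \<Rightarrow> mat \<times> int" where
  "Lambda_pn n A = (case Delta n A of (k, P, c, e) \<Rightarrow>
      ((THE N. (positive n N \<or> neutral n N) \<and> Delta n N = (k, P, c + e, 0)), e))"

definition Lambda :: "nat \<Rightarrow> mat \<Rightarrow> mat \<times> int" where
  "Lambda n A = (if negative n A then
      (case Lambda_pn n (refl n A) of (M, e) \<Rightarrow> (refl n M, - e))
    else Lambda_pn n A)"

end

(*
  An element of A_{n,1} is a permutation matrix except in its closing row and its opening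
  column, which both read 1, -1, 1. For positive or neutral A the partial discharge delta(A) is a
  permutation matrix, and the neutral N with Delta(N) = (k, delta(A), c(A) + E(A), 0) can be
  written down explicitly: its closing column is the (c(A) + E(A))-th column right of the opening
  column carrying a 1 of delta(A) below row k + 1 (there are enough of them, coming from the
  closing and the charged columns of A), and undoing the horizontal displacement below that row
  recovers N. Every neutral matrix is recovered in this way from Delta(N), so this N is the first
  component of Lambda(A). Below the opening row, the columns of the leading cell carry the same
  number of 1s in A and in delta(A), so l(N) = l(A), while c(N) = c(A) + E(A). As l, c and E are
  nonnegative, -l(N) = -l(A) <= c(A) - l(A) = B(A) <= c(A) + E(A) = c(N). A negative matrix is
  reflected into a positive one, and reflection exchanges l and c on neutral matrices.
*)

theory Submission
  imports Defs
begin

section \<open>Alternating lists\<close>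

lemma alternating_nth:
  assumes "alternating xs" "p < length xs"
  shows "xs ! p = (-1) ^ p"
  using assms(2)
proof (induction p)
  case 0
  then show ?case using assms(1) by (auto simp: alternating_def hd_conv_nth)
next
  case (Suc p)
  then show ?case using assms(1) by (auto simp: alternating_def)
qed

lemma alternating_length_odd:
  assumes "alternating xs"
  shows "odd (length xs)"
proof -
  have ne: "xs \<noteq> []" using assms by (auto simp: alternating_def)
  have "(-1::int) ^ (length xs - 1) = last xs"
    using alternating_nth[OF assms, of "length xs - 1"] ne by (simp add: last_conv_nth)
  also have "\<dots> = 1" using assms by (simp add: alternating_def)
  finally have "even (length xs - 1)" by (metis neg_one_odd_power one_neq_neg_one)
  then show ?thesis using ne by simp
qed

definition nonzero_positions :: "nat \<Rightarrow> (nat \<Rightarrow> int) \<Rightarrow> nat list" where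
  "nonzero_positions n f = filter (\<lambda>j. f j \<noteq> 0) [1..<n+1]"

lemma nonzero_positions_sorted: "sorted_wrt (<) (nonzero_positions n f)"
  unfolding nonzero_positions_def by (intro sorted_wrt_filter sorted_wrt_upt)

lemma set_nonzero_positions: "set (nonzero_positions n f) = {j. 1 \<le> j \<and> j \<le> n \<and> f j \<noteq> 0}"
  unfolding nonzero_positions_def by auto

lemma nonzero_positions_eqI:
  assumes "sorted_wrt (<) xs" "set xs = {j. 1 \<le> j \<and> j \<le> n \<and> f j \<noteq> 0}"
  shows "nonzero_positions n f = xs"
  using strict_sorted_equal[OF nonzero_positions_sorted assms(1)] assms(2)
  by (simp add: set_nonzero_positions)

lemma nonzero_entries_eq: "[f j. j \<leftarrow> [1..<n+1], f j \<noteq> 0] = map f (nonzero_positions n f)"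
proof -
  have "[f j. j \<leftarrow> xs, f j \<noteq> 0] = map f (filter (\<lambda>j. f j \<noteq> 0) xs)" for xs
    by (induction xs) auto
  then show ?thesis unfolding nonzero_positions_def .
qed

lemma alternating_without_neg_one:
  assumes alt: "alternating (map f (nonzero_positions n f))" and no_neg: "\<And>j. f j \<noteq> -1"
  obtains j0 where "1 \<le> j0" "j0 \<le> n" "f j0 = 1" "\<And>j. 1 \<le> j \<Longrightarrow> j \<le> n \<Longrightarrow> j \<noteq> j0 \<Longrightarrow> f j = 0"
proof -
  let ?J = "nonzero_positions n f"
  have "length ?J = 1"
  proof (rule ccontr)
    assume "length ?J \<noteq> 1"
    moreover have "?J \<noteq> []" using alt by (auto simp: alternating_def)
    ultimately have "1 < length ?J" by (cases ?J) auto
    then show False using alternating_nth[OF alt, of 1] no_neg by simp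
  qed
  then obtain j0 where J: "?J = [j0]" by (auto simp: length_Suc_conv)
  have "hd (map f ?J) = 1" using alt by (simp add: alternating_def)
  then show ?thesis
    using that[of j0] J set_nonzero_positions[of n f] by (auto simp: set_eq_iff)
qed

lemma alternating_with_neg_one:
  assumes alt: "alternating (map f (nonzero_positions n f))"
    and neg: "f m = -1" "1 \<le> m" "m \<le> n" and neg_unique: "\<And>j. j \<noteq> m \<Longrightarrow> f j \<noteq> -1"
  obtains p q where "1 \<le> p" "p < m" "m < q" "q \<le> n" "f p = 1" "f q = 1"
    "\<And>j. 1 \<le> j \<Longrightarrow> j \<le> n \<Longrightarrow> j \<noteq> p \<Longrightarrow> j \<noteq> m \<Longrightarrow> j \<noteq> q \<Longrightarrow> f j = 0"
proof -
  let ?J = "nonzero_positions n f"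
  have dist: "distinct ?J" using nonzero_positions_sorted strict_sorted_iff by blast
  have odd_at_m: "?J ! t = m" if "t < length ?J" "odd t" for t
    using alternating_nth[OF alt, of t] that neg_unique by fastforce
  obtain t where t: "t < length ?J" "?J ! t = m"
  proof -
    have "m \<in> set ?J" using neg by (simp add: set_nonzero_positions)
    then show ?thesis using that by (auto simp: in_set_conv_nth)
  qed
  have "odd t" using alternating_nth[OF alt, of t] t neg by (auto dest: neg_one_even_power)
  have "length ?J \<le> 3"
  proof (rule ccontr)
    assume "\<not> length ?J \<le> 3"
    then have "?J ! 1 = ?J ! 3" using odd_at_m by simp
    then show False
      using \<open>\<not> length ?J \<le> 3\<close> nth_eq_iff_index_eq[OF dist, of 1 3] by simp
  qed
  moreover have "odd (length ?J)" using alternating_length_odd[OF alt] by simp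
  moreover have "1 < length ?J" using t \<open>odd t\<close> by (cases t) auto
  ultimately have "length ?J = 3" by (auto simp: le_Suc_eq eval_nat_numeral)
  then obtain p m' q where J: "?J = [p, m', q]" by (auto simp: length_Suc_conv numeral_3_eq_3)
  have "m' = m" using odd_at_m[of 1] J by simp
  have "p < m" "m < q" using nonzero_positions_sorted[of n f] J \<open>m' = m\<close> by auto
  moreover have "f p = 1" "f q = 1" using alt J by (auto simp: alternating_def)
  moreover have "p \<in> set ?J" "q \<in> set ?J" using J by auto
  then have "1 \<le> p" "q \<le> n" by (auto simp: set_nonzero_positions)
  moreover have "f j = 0" if "1 \<le> j" "j \<le> n" "j \<noteq> p" "j \<noteq> m" "j \<noteq> q" for j
    using that J \<open>m' = m\<close> set_nonzero_positions[of n f] by auto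
  ultimately show ?thesis using that by blast
qed

lemma alternating_singleton: "alternating [1]"
  by (simp add: alternating_def)

lemma alternating_triple: "alternating [1, -1, 1]"
  unfolding alternating_def by (auto simp: less_Suc_eq nth_Cons')

lemma is_asm_row_alternating:
  assumes "is_asm n A" "1 \<le> i" "i \<le> n"
  shows "alternating (map (A i) (nonzero_positions n (A i)))"
  using assms by (simp add: is_asm_def nonzero_entries_eq[symmetric] del: upt_Suc)

lemma is_asm_col_alternating:
  assumes "is_asm n A" "1 \<le> j" "j \<le> n"
  shows "alternating (map (\<lambda>i. A i j) (nonzero_positions n (\<lambda>i. A i j)))"
  using assms by (simp add: is_asm_def nonzero_entries_eq[symmetric] del: upt_Suc)

section \<open>Neighbours in a set of natural numbers\<close>

definition pred_in :: "nat set \<Rightarrow> nat \<Rightarrow> nat" where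
  "pred_in X j = (GREATEST s. s \<in> X \<and> s < j)"

definition succ_in :: "nat set \<Rightarrow> nat \<Rightarrow> nat" where
  "succ_in Y j = (LEAST u. u \<in> Y \<and> j < u)"

lemma pred_in_greatest:
  assumes "s \<in> X" "s < j"
  shows "pred_in X j \<in> X" "pred_in X j < j" "\<And>t. t \<in> X \<Longrightarrow> t < j \<Longrightarrow> t \<le> pred_in X j"
proof -
  show "pred_in X j \<in> X" "pred_in X j < j"
    using GreatestI_nat[of "\<lambda>s. s \<in> X \<and> s < j" s j] assms unfolding pred_in_def by auto
  show "t \<le> pred_in X j" if "t \<in> X" "t < j" for t
    using Greatest_le_nat[of "\<lambda>s. s \<in> X \<and> s < j" t j] that unfolding pred_in_def by auto
qed

lemma succ_in_least:
  assumes "u \<in> Y" "j < u"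
  shows "succ_in Y j \<in> Y" "j < succ_in Y j" "\<And>t. t \<in> Y \<Longrightarrow> j < t \<Longrightarrow> succ_in Y j \<le> t"
proof -
  show "succ_in Y j \<in> Y" "j < succ_in Y j"
    using LeastI[of "\<lambda>u. u \<in> Y \<and> j < u" u] assms unfolding succ_in_def by auto
  show "succ_in Y j \<le> t" if "t \<in> Y" "j < t" for t
    using Least_le[of "\<lambda>u. u \<in> Y \<and> j < u" t] that unfolding succ_in_def by auto
qed

text \<open>Both displacements \<open>H\<close> and \<open>V\<close> move each element of \<open>X\<close> to the next element of \<open>Y\<close>; when
  \<open>Y\<close> agrees with \<open>X\<close> on \<open>(m, c)\<close> and contains \<open>c\<close>, this is a bijection from \<open>X\<close> onto \<open>Y \<inter>
  {m<..c}\<close> with inverse \<open>pred_in X\<close>.\<close>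

locale interleaved =
  fixes X Y :: "nat set" and m c :: nat
  assumes min_mem: "m \<in> X" and X_bounds: "s \<in> X \<Longrightarrow> m \<le> s \<and> s < c"
    and Y_iff: "m < u \<Longrightarrow> u \<le> c \<Longrightarrow> u \<in> Y \<longleftrightarrow> u \<in> X \<or> u = c"
begin

lemma max_mem: "c \<in> Y"
  using Y_iff[of c] X_bounds[OF min_mem] by simp

lemma succ_in_bounds:
  assumes "j \<in> X"
  shows "succ_in Y j \<in> Y" "j < succ_in Y j" "succ_in Y j \<le> c"
  using succ_in_least[OF max_mem, of j] succ_in_least(3)[OF max_mem _ max_mem, of j]
    X_bounds[OF assms] by auto

lemma pred_in_succ_in:
  assumes j: "j \<in> X"
  shows "pred_in X (succ_in Y j) = j"
proof -
  note s = succ_in_bounds[OF j]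
  note p = pred_in_greatest[OF j s(2)]
  have "\<not> j < pred_in X (succ_in Y j)"
  proof
    assume less: "j < pred_in X (succ_in Y j)"
    then have "pred_in X (succ_in Y j) \<in> Y"
      using Y_iff p(1,2) s(3) X_bounds[OF j] by auto
    then have "succ_in Y j \<le> pred_in X (succ_in Y j)"
      using succ_in_least(3)[OF max_mem _ _ less] X_bounds[OF j] by blast
    then show False using p(2) by simp
  qed
  then show ?thesis using p(3)[OF j s(2)] by simp
qed

lemma pred_in_bounds:
  assumes "m < u"
  shows "pred_in X u \<in> X" "pred_in X u < u"
  using pred_in_greatest[OF min_mem assms] by auto

lemma succ_in_pred_in:
  assumes u: "u \<in> Y" "m < u" "u \<le> c"
  shows "succ_in Y (pred_in X u) = u"
proof -
  note p = pred_in_bounds[OF u(2)]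
  note s = succ_in_least[OF u(1) p(2)]
  have "\<not> succ_in Y (pred_in X u) < u"
  proof
    assume less: "succ_in Y (pred_in X u) < u"
    then have "succ_in Y (pred_in X u) \<in> X"
      using Y_iff s(1,2) u X_bounds[OF p(1)] by auto
    then show False using pred_in_greatest(3)[OF min_mem u(2) _ less] s(2) by simp
  qed
  then show ?thesis using s(3)[OF u(1) p(2)] by simp
qed

end

lemma card_less_sorted_list_nth:
  fixes U :: "nat set"
  assumes "finite U" "i < card U"
  shows "card {x \<in> U. x < sorted_list_of_set U ! i} = i"
proof -
  let ?xs = "sorted_list_of_set U"
  have srt: "sorted_wrt (<) ?xs" and len: "i < length ?xs" and U: "x \<in> U \<longleftrightarrow> x \<in> set ?xs" for x
    using assms by auto
  have "{x \<in> U. x < ?xs ! i} = set (take i ?xs)"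
  proof (intro set_eqI iffI)
    fix x assume "x \<in> {x \<in> U. x < ?xs ! i}"
    then obtain j where j: "j < length ?xs" "x = ?xs ! j" "x < ?xs ! i"
      by (auto simp: U in_set_conv_nth)
    have "j < i"
    proof (rule ccontr)
      assume "\<not> j < i"
      then have "?xs ! i \<le> ?xs ! j" using sorted_nth_mono[of ?xs i j] j(1) by simp
      then show False using j by simp
    qed
    then show "x \<in> set (take i ?xs)" using j by (auto simp: in_set_conv_nth)
  next
    fix x assume "x \<in> set (take i ?xs)"
    then obtain j where "j < i" "x = ?xs ! j" using len by (auto simp: in_set_conv_nth)
    then show "x \<in> {x \<in> U. x < ?xs ! i}"
      using sorted_wrt_nth_less[OF srt, of j i] len by (auto simp: U)
  qed
  then show ?thesis using len by (simp add: distinct_card)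
qed

lemma sorted_list_nth_card_less:
  fixes U :: "nat set"
  assumes "finite U" "u \<in> U"
  shows "sorted_list_of_set U ! card {x \<in> U. x < u} = u"
proof -
  obtain i where i: "i < card U" "u = sorted_list_of_set U ! i"
    using assms by (metis in_set_conv_nth length_sorted_list_of_set set_sorted_list_of_set)
  then show ?thesis using card_less_sorted_list_nth[OF assms(1) i(1)] by simp
qed

section \<open>Permutation matrices\<close>

locale perm_matrix =
  fixes n :: nat and P :: mat
  assumes entry_01: "P i j = 0 \<or> P i j = 1"
    and outside: "\<not> (1 \<le> i \<and> i \<le> n \<and> 1 \<le> j \<and> j \<le> n) \<Longrightarrow> P i j = 0"
    and row_ex: "1 \<le> i \<Longrightarrow> i \<le> n \<Longrightarrow> \<exists>j. P i j = 1"
    and row_unique: "P i j1 = 1 \<Longrightarrow> P i j2 = 1 \<Longrightarrow> j1 = j2"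
    and col_ex: "1 \<le> j \<Longrightarrow> j \<le> n \<Longrightarrow> \<exists>i. P i j = 1"
    and col_unique: "P i1 j = 1 \<Longrightarrow> P i2 j = 1 \<Longrightarrow> i1 = i2"
begin

lemma zero_if_not_one: "P i j \<noteq> 1 \<Longrightarrow> P i j = 0"
  using entry_01 by blast

lemma one_in_range: "P i j = 1 \<Longrightarrow> 1 \<le> i \<and> i \<le> n \<and> 1 \<le> j \<and> j \<le> n"
  using outside[of i j] by fastforce

end

lemma sum_eq_one_at:
  fixes f :: "nat \<Rightarrow> int"
  assumes "finite I" "f g = 1" "\<And>i. i \<noteq> g \<Longrightarrow> f i = 0"
  shows "(\<Sum>i\<in>I. f i) = (if g \<in> I then 1 else 0)"
proof -
  have "(\<Sum>i\<in>I. f i) = (\<Sum>i\<in>I. if i = g then 1 else 0)"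
    using assms by (intro sum.cong) auto
  then show ?thesis using assms(1) by simp
qed

lemma all_one_if_sums_eq:
  fixes R C :: "nat \<Rightarrow> int"
  assumes "finite I" "\<And>i. i \<in> I \<Longrightarrow> R i \<le> 1" "\<And>i. i \<in> I \<Longrightarrow> 1 \<le> C i"
    and "(\<Sum>i\<in>I. R i) = (\<Sum>i\<in>I. C i)"
  shows "i \<in> I \<Longrightarrow> R i = 1" "i \<in> I \<Longrightarrow> C i = 1"
proof -
  have R: "0 \<le> 1 - R i" if "i \<in> I" for i using assms(2)[OF that] by linarith
  have C: "0 \<le> C i - 1" if "i \<in> I" for i using assms(3)[OF that] by linarith
  have "(\<Sum>i\<in>I. 1 - R i) + (\<Sum>i\<in>I. C i - 1) = 0"
    using assms(4) by (simp add: sum_subtractf)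
  moreover have "0 \<le> (\<Sum>i\<in>I. 1 - R i)" "0 \<le> (\<Sum>i\<in>I. C i - 1)"
    using R C by (auto intro: sum_nonneg)
  ultimately have "(\<Sum>i\<in>I. 1 - R i) = 0" "(\<Sum>i\<in>I. C i - 1) = 0" by linarith+
  then show "R i = 1" "C i = 1" if "i \<in> I"
    using sum_nonneg_0[OF assms(1) R] sum_nonneg_0[OF assms(1) C] that by fastforce+
qed

text \<open>Double counting: if no row has two \<open>1\<close>s but every column has one, all row and column sums
  equal \<open>1\<close>.\<close>

lemma perm_matrixI:
  fixes P :: mat
  assumes vals: "\<And>i j. P i j = 0 \<or> P i j = 1"
    and outside: "\<And>i j. \<not> (1 \<le> i \<and> i \<le> n \<and> 1 \<le> j \<and> j \<le> n) \<Longrightarrow> P i j = 0"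
    and row_unique: "\<And>i j1 j2. P i j1 = 1 \<Longrightarrow> P i j2 = 1 \<Longrightarrow> j1 = j2"
    and col_ex: "\<And>j. 1 \<le> j \<Longrightarrow> j \<le> n \<Longrightarrow> \<exists>i. P i j = 1"
  shows "perm_matrix n P"
proof -
  define R where "R i = (\<Sum>j\<in>{1..n}. P i j)" for i
  define C where "C j = (\<Sum>i\<in>{1..n}. P i j)" for j
  have nonneg: "0 \<le> P i j" for i j using vals[of i j] by auto
  have R_le: "R i \<le> 1" for i
  proof (cases "\<exists>j. P i j = 1")
    case True
    then obtain j0 where "P i j0 = 1" by auto
    then have "R i = (if j0 \<in> {1..n} then 1 else 0)"
      unfolding R_def using row_unique vals by (intro sum_eq_one_at) (auto, metis)
    then show ?thesis by simp
  next
    case False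
    then have "P i j = 0" for j using vals by metis
    then show ?thesis by (simp add: R_def)
  qed
  have C_ge: "1 \<le> C j" if j: "j \<in> {1..n}" for j
  proof -
    obtain i where i: "P i j = 1" using col_ex j by auto
    then have "i \<in> {1..n}" using outside[of i j] by fastforce
    then show ?thesis
      using i member_le_sum[of i "{1..n}" "\<lambda>i. P i j"] nonneg by (simp add: C_def)
  qed
  have "(\<Sum>i\<in>{1..n}. R i) = (\<Sum>j\<in>{1..n}. C j)"
    unfolding R_def C_def by (rule sum.swap)
  note all_one = all_one_if_sums_eq[OF finite_atLeastAtMost R_le C_ge this]
  have "\<exists>j. P i j = 1" if "1 \<le> i" "i \<le> n" for i
  proof (rule ccontr)
    assume "\<nexists>j. P i j = 1"
    then have "R i = 0" using vals by (metis R_def sum.neutral)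
    then show False using all_one(1)[of i] that by simp
  qed
  moreover have "i1 = i2" if "P i1 j = 1" "P i2 j = 1" for i1 i2 j
  proof (rule ccontr)
    assume "i1 \<noteq> i2"
    moreover have "i1 \<in> {1..n}" "i2 \<in> {1..n}" "j \<in> {1..n}"
      using that outside[of i1 j] outside[of i2 j] by fastforce+
    ultimately have "(\<Sum>i\<in>{i1, i2}. P i j) \<le> C j"
      unfolding C_def using nonneg by (intro sum_mono2) auto
    then show False
      using that all_one(2) \<open>i1 \<noteq> i2\<close> \<open>j \<in> {1..n}\<close> by simp
  qed
  ultimately show ?thesis
    using vals outside row_unique col_ex by unfold_locales blast+
qed

section \<open>Matrices with a single negative entry\<close>

text \<open>An element of \<open>\<A>\<^sub>n\<^sub>,\<^sub>1\<close> with its \<open>-1\<close> at \<open>(r, oc)\<close>: \<open>k\<close> is the opening row, \<open>oc\<close> the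
  opening column, \<open>r\<close> the closing row and \<open>cc\<close> the closing column; the other \<open>1\<close> of the closing
  row lies in column \<open>b\<close>, the other \<open>1\<close> of the opening column in row \<open>d\<close>.\<close>

locale asm1_layout =
  fixes n :: nat and A :: mat and k r oc b cc d :: nat
  assumes bounds: "1 \<le> k" "k < r" "r < d" "d \<le> n" "1 \<le> b" "b < oc" "oc < cc" "cc \<le> n"
    and outside: "\<not> (1 \<le> i \<and> i \<le> n \<and> 1 \<le> j \<and> j \<le> n) \<Longrightarrow> A i j = 0"
    and neg_one: "A r oc = -1"
    and closing_row_ones: "A r b = 1" "A r cc = 1"
    and opening_col_ones: "A k oc = 1" "A d oc = 1"
    and closing_row_zero: "j \<noteq> b \<Longrightarrow> j \<noteq> oc \<Longrightarrow> j \<noteq> cc \<Longrightarrow> A r j = 0"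
    and opening_col_zero: "i \<noteq> k \<Longrightarrow> i \<noteq> r \<Longrightarrow> i \<noteq> d \<Longrightarrow> A i oc = 0"
    and row_unit: "1 \<le> i \<Longrightarrow> i \<le> n \<Longrightarrow> i \<noteq> r \<Longrightarrow> \<exists>j. A i j = 1 \<and> (\<forall>j'. j' \<noteq> j \<longrightarrow> A i j' = 0)"
    and col_unit: "1 \<le> j \<Longrightarrow> j \<le> n \<Longrightarrow> j \<noteq> oc \<Longrightarrow> \<exists>i. A i j = 1 \<and> (\<forall>i'. i' \<noteq> i \<longrightarrow> A i' j = 0)"

lemma is_asm_outside:
  "is_asm n A \<Longrightarrow> \<not> (1 \<le> i \<and> i \<le> n \<and> 1 \<le> j \<and> j \<le> n) \<Longrightarrow> A i j = 0"
  by (simp add: is_asm_def)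

lemma asm1_obtain_neg_one:
  assumes "asm1 n A"
  obtains r oc where "1 \<le> r" "r \<le> n" "1 \<le> oc" "oc \<le> n" "A r oc = -1"
    "\<And>i j. A i j = -1 \<Longrightarrow> i = r \<and> j = oc"
proof -
  let ?neg = "{(i, j). i \<in> {1..n} \<and> j \<in> {1..n} \<and> A i j = -1}"
  have "card ?neg = 1" using assms by (simp add: asm_s_def)
  then obtain p where "?neg = {p}" by (rule card_1_singletonE)
  moreover obtain r oc where "p = (r, oc)" by (cases p)
  ultimately have neg: "?neg = {(r, oc)}" by simp
  have mem: "(i, j) \<in> ?neg" if "A i j = -1" for i j
    using is_asm_outside[of n A i j] assms that by (force simp: asm_s_def)
  show ?thesis
  proof (rule that)
    have "(r, oc) \<in> ?neg" using neg by simp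
    then show "1 \<le> r" "r \<le> n" "1 \<le> oc" "oc \<le> n" "A r oc = -1" by auto
    show "i = r \<and> j = oc" if "A i j = -1" for i j
      using mem[OF that] unfolding neg by simp
  qed
qed

lemma asm1_obtain_layout:
  assumes "asm1 n A"
  obtains k r oc b cc d where "asm1_layout n A k r oc b cc d"
proof -
  have asm: "is_asm n A" using assms by (simp add: asm_s_def)
  note outside = is_asm_outside[OF asm]
  obtain r oc where roc: "1 \<le> r" "r \<le> n" "1 \<le> oc" "oc \<le> n" "A r oc = -1"
    and neg_unique: "\<And>i j. A i j = -1 \<Longrightarrow> i = r \<and> j = oc"
    using asm1_obtain_neg_one[OF assms] by blast
  have row_r: "A r j \<noteq> -1" if "j \<noteq> oc" for j
    using neg_unique that by blast
  obtain b cc where bcc: "1 \<le> b" "b < oc" "oc < cc" "cc \<le> n" "A r b = 1" "A r cc = 1"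
    "\<And>j. 1 \<le> j \<Longrightarrow> j \<le> n \<Longrightarrow> j \<noteq> b \<Longrightarrow> j \<noteq> oc \<Longrightarrow> j \<noteq> cc \<Longrightarrow> A r j = 0"
    using alternating_with_neg_one[OF is_asm_row_alternating[OF asm roc(1,2)] roc(5,3,4) row_r]
    by blast
  have col_oc: "A i oc \<noteq> -1" if "i \<noteq> r" for i
    using neg_unique that by blast
  obtain k d where kd: "1 \<le> k" "k < r" "r < d" "d \<le> n" "A k oc = 1" "A d oc = 1"
    "\<And>i. 1 \<le> i \<Longrightarrow> i \<le> n \<Longrightarrow> i \<noteq> k \<Longrightarrow> i \<noteq> r \<Longrightarrow> i \<noteq> d \<Longrightarrow> A i oc = 0"
    using alternating_with_neg_one[of "\<lambda>i. A i oc",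
        OF is_asm_col_alternating[OF asm roc(3,4)] roc(5,1,2) col_oc]
    by blast
  have rows: "\<exists>j. A i j = 1 \<and> (\<forall>j'. j' \<noteq> j \<longrightarrow> A i j' = 0)" if i: "1 \<le> i" "i \<le> n" "i \<noteq> r" for i
  proof -
    have "A i j \<noteq> -1" for j using neg_unique i(3) by blast
    then obtain j0 where "A i j0 = 1" "\<And>j. 1 \<le> j \<Longrightarrow> j \<le> n \<Longrightarrow> j \<noteq> j0 \<Longrightarrow> A i j = 0"
      using alternating_without_neg_one[OF is_asm_row_alternating[OF asm i(1,2)]] by blast
    then show ?thesis using outside[of i] i(1,2) by (intro exI[of _ j0]) auto
  qed
  have cols: "\<exists>i. A i j = 1 \<and> (\<forall>i'. i' \<noteq> i \<longrightarrow> A i' j = 0)" if j: "1 \<le> j" "j \<le> n" "j \<noteq> oc" for j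
  proof -
    have "A i j \<noteq> -1" for i using neg_unique j(3) by blast
    then obtain i0 where "A i0 j = 1" "\<And>i. 1 \<le> i \<Longrightarrow> i \<le> n \<Longrightarrow> i \<noteq> i0 \<Longrightarrow> A i j = 0"
      using alternating_without_neg_one[of "\<lambda>i. A i j",
          OF is_asm_col_alternating[OF asm j(1,2)]]
      by blast
    then show ?thesis using outside[of _ j] j(1,2) by (intro exI[of _ i0]) auto
  qed
  have "asm1_layout n A k r oc b cc d"
  proof
    show "A r j = 0" if "j \<noteq> b" "j \<noteq> oc" "j \<noteq> cc" for j
      using bcc(7)[OF _ _ that] outside[of r j] by fastforce
    show "A i oc = 0" if "i \<noteq> k" "i \<noteq> r" "i \<noteq> d" for i
      using kd(7)[OF _ _ that] outside[of i oc] by fastforce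
  qed (use bcc(1-6) kd(1-6) roc(5) outside rows cols in blast)+
  then show ?thesis by (rule that)
qed

context asm1_layout
begin

lemma entry_cases: "(i = r \<and> j = oc) \<or> A i j = 0 \<or> A i j = 1"
proof -
  consider "i = r" | "i \<noteq> r" "j = oc" | "i \<noteq> r" "j \<noteq> oc" "1 \<le> i \<and> i \<le> n"
    | "\<not> (1 \<le> i \<and> i \<le> n)" by blast
  then show ?thesis
  proof cases
    case 1
    then show ?thesis using closing_row_ones closing_row_zero[of j] by blast
  next
    case 2
    then show ?thesis using opening_col_ones opening_col_zero[of i] by blast
  next
    case 3
    then show ?thesis using row_unit[of i] by metis
  qed (use outside in blast)
qed

lemma neg_one_iff: "A i j = -1 \<longleftrightarrow> i = r \<and> j = oc"
  using entry_cases[of i j] neg_one by auto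

lemma entry_01: "(i, j) \<noteq> (r, oc) \<Longrightarrow> A i j = 0 \<or> A i j = 1"
  using entry_cases[of i j] by auto

lemma nonzero_imp_one: "A i j \<noteq> 0 \<Longrightarrow> (i, j) \<noteq> (r, oc) \<Longrightarrow> A i j = 1"
  using entry_01 by blast

lemma nonneg: "j \<noteq> oc \<Longrightarrow> 0 \<le> A i j"
  using entry_01[of i j] by auto

lemma one_in_range: "A i j = 1 \<Longrightarrow> 1 \<le> i \<and> i \<le> n \<and> 1 \<le> j \<and> j \<le> n"
  using outside[of i j] by fastforce

lemma row_one_unique: "i \<noteq> r \<Longrightarrow> A i j1 = 1 \<Longrightarrow> A i j2 = 1 \<Longrightarrow> j1 = j2"
  using row_unit[of i] one_in_range[of i j1] by (metis zero_neq_one)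

lemma col_one_unique: "j \<noteq> oc \<Longrightarrow> A i1 j = 1 \<Longrightarrow> A i2 j = 1 \<Longrightarrow> i1 = i2"
  using col_unit[of j] one_in_range[of i1 j] by (metis zero_neq_one)

lemma closing_row_one_iff: "A r j = 1 \<longleftrightarrow> j = b \<or> j = cc"
  using closing_row_ones closing_row_zero[of j] neg_one
  by (cases "j = b \<or> j = oc \<or> j = cc") auto

lemma opening_col_one_iff: "A i oc = 1 \<longleftrightarrow> i = k \<or> i = d"
  using opening_col_ones opening_col_zero[of i] neg_one
  by (cases "i = k \<or> i = r \<or> i = d") auto

lemma opening_row_entry: "A k j = (if j = oc then 1 else 0)"
proof -
  have "k \<noteq> r" using bounds by simp
  then have "A k j \<noteq> 1" if "j \<noteq> oc"
    using row_one_unique[of k oc j] opening_col_ones that by blast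
  then show ?thesis using entry_01[of k j] opening_col_ones \<open>k \<noteq> r\<close> by auto
qed

lemma closing_col_entry: "A i cc = (if i = r then 1 else 0)"
proof -
  have "cc \<noteq> oc" using bounds by simp
  then have "A i cc \<noteq> 1" if "i \<noteq> r"
    using col_one_unique[of cc r i] closing_row_ones that by blast
  then show ?thesis using entry_01[of i cc] closing_row_ones \<open>cc \<noteq> oc\<close> by auto
qed

lemma left_one_unique: "j1 < oc \<Longrightarrow> j2 < oc \<Longrightarrow> A i j1 = 1 \<Longrightarrow> A i j2 = 1 \<Longrightarrow> j1 = j2"
  using row_one_unique[of i j1 j2] closing_row_one_iff[of j1] closing_row_one_iff[of j2] bounds
  by (cases "i = r") auto

lemma neg_pos_eq: "neg_pos A = (r, oc)"
  unfolding neg_pos_def by (rule the_equality) (auto simp: neg_one_iff)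

lemma closing_row_eq: "closing_row A = r"
  by (simp add: closing_row_def neg_pos_eq)

lemma opening_col_eq: "opening_col A = oc"
  by (simp add: opening_col_def neg_pos_eq)

lemma opening_row_eq: "opening_row A = k"
  unfolding opening_row_def closing_row_eq opening_col_eq
  by (rule the_equality) (use bounds opening_col_one_iff opening_col_ones in auto)

lemma closing_col_eq: "closing_col A = cc"
  unfolding closing_col_def closing_row_eq opening_col_eq
  by (rule the_equality) (use bounds closing_row_one_iff closing_row_ones in auto)

lemma row_alternating:
  assumes i: "1 \<le> i" "i \<le> n"
  shows "alternating [A i j. j \<leftarrow> [1..<n+1], A i j \<noteq> 0]"
proof (cases "i = r")
  case True
  have "nonzero_positions n (A i) = [b, oc, cc]"
    using True bounds closing_row_zero closing_row_ones neg_one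
    by (intro nonzero_positions_eqI) auto
  then show ?thesis
    unfolding nonzero_entries_eq using True closing_row_ones neg_one alternating_triple by simp
next
  case False
  then obtain j0 where j0: "A i j0 = 1" "\<And>j. j \<noteq> j0 \<Longrightarrow> A i j = 0"
    using row_unit[of i] i by auto
  then have "nonzero_positions n (A i) = [j0]"
    using one_in_range[of i j0] by (intro nonzero_positions_eqI) auto
  then show ?thesis unfolding nonzero_entries_eq using j0 alternating_singleton by simp
qed

lemma col_alternating:
  assumes j: "1 \<le> j" "j \<le> n"
  shows "alternating [A i j. i \<leftarrow> [1..<n+1], A i j \<noteq> 0]"
proof (cases "j = oc")
  case True
  have "nonzero_positions n (\<lambda>i. A i j) = [k, r, d]"
    using True bounds opening_col_zero opening_col_ones neg_one
    by (intro nonzero_positions_eqI) auto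
  then show ?thesis
    unfolding nonzero_entries_eq using True opening_col_ones neg_one alternating_triple by simp
next
  case False
  then obtain i0 where i0: "A i0 j = 1" "\<And>i. i \<noteq> i0 \<Longrightarrow> A i j = 0"
    using col_unit[of j] j by auto
  then have "nonzero_positions n (\<lambda>i. A i j) = [i0]"
    using one_in_range[of i0 j] by (intro nonzero_positions_eqI) auto
  then show ?thesis unfolding nonzero_entries_eq using i0 alternating_singleton by simp
qed

lemma asm1: "asm1 n A"
proof -
  have "A i j \<in> {-1, 0, 1}" for i j
    using entry_cases[of i j] neg_one by auto
  then have "is_asm n A"
    unfolding is_asm_def using outside row_alternating col_alternating by auto
  moreover have "{(i, j). i \<in> {1..n} \<and> j \<in> {1..n} \<and> A i j = -1} = {(r, oc)}"
    unfolding neg_one_iff using bounds by auto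
  ultimately show ?thesis unfolding asm_s_def by simp
qed

lemma refl_entry: "refl n A i j = (if 1 \<le> j \<and> j \<le> n then A i (n + 1 - j) else 0)"
  by (simp add: refl_def)

lemma refl_layout: "asm1_layout n (refl n A) k r (n + 1 - oc) (n + 1 - cc) (n + 1 - b) d"
proof
  fix i j
  show "refl n A i j = 0" if "\<not> (1 \<le> i \<and> i \<le> n \<and> 1 \<le> j \<and> j \<le> n)"
    using that outside[of i "n + 1 - j"] by (auto simp: refl_entry)
  show "refl n A r j = 0" if "j \<noteq> n + 1 - cc" "j \<noteq> n + 1 - oc" "j \<noteq> n + 1 - b"
    using that bounds closing_row_zero[of "n + 1 - j"] by (auto simp: refl_entry)
  show "refl n A i (n + 1 - oc) = 0" if "i \<noteq> k" "i \<noteq> r" "i \<noteq> d"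
    using that bounds opening_col_zero[of i] by (auto simp: refl_entry)
next
  fix i assume i: "1 \<le> i" "i \<le> n" "i \<noteq> r"
  then obtain j where j: "A i j = 1" "\<And>j'. j' \<noteq> j \<Longrightarrow> A i j' = 0"
    using row_unit by blast
  have "1 \<le> j" "j \<le> n" using one_in_range[OF j(1)] by auto
  then show "\<exists>j. refl n A i j = 1 \<and> (\<forall>j'. j' \<noteq> j \<longrightarrow> refl n A i j' = 0)"
    using j by (intro exI[of _ "n + 1 - j"]) (auto simp: refl_entry)
next
  fix j assume j: "1 \<le> j" "j \<le> n" "j \<noteq> n + 1 - oc"
  then have "n + 1 - j \<noteq> oc" "1 \<le> n + 1 - j" "n + 1 - j \<le> n" using bounds by auto
  then obtain i where "A i (n + 1 - j) = 1" "\<And>i'. i' \<noteq> i \<Longrightarrow> A i' (n + 1 - j) = 0"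
    using col_unit by blast
  then show "\<exists>i. refl n A i j = 1 \<and> (\<forall>i'. i' \<noteq> i \<longrightarrow> refl n A i' j = 0)"
    using j by (auto simp: refl_entry)
qed (use bounds neg_one closing_row_ones opening_col_ones in \<open>auto simp: refl_entry\<close>)

section \<open>The partial discharge in closed form\<close>

definition closing_cols :: "nat set" where
  "closing_cols = {j \<in> {oc..cc}. \<exists>i\<in>{r<..n}. A i j \<noteq> 0}"

definition neutral_rows :: "nat set" where
  "neutral_rows = {i \<in> {k..r}. \<exists>j\<in>{1..<oc}. A i j \<noteq> 0}"

lemma closing_cols_iff: "j \<in> closing_cols \<longleftrightarrow> oc \<le> j \<and> j \<le> cc \<and> (\<exists>i. r < i \<and> A i j = 1)"
proof
  assume "j \<in> closing_cols"
  then obtain i where "oc \<le> j" "j \<le> cc" "r < i" "i \<le> n" "A i j \<noteq> 0"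
    by (auto simp: closing_cols_def)
  then show "oc \<le> j \<and> j \<le> cc \<and> (\<exists>i. r < i \<and> A i j = 1)"
    using nonzero_imp_one[of i j] by auto
next
  assume "oc \<le> j \<and> j \<le> cc \<and> (\<exists>i. r < i \<and> A i j = 1)"
  then obtain i where "oc \<le> j" "j \<le> cc" "r < i" "A i j = 1" by auto
  then show "j \<in> closing_cols" using one_in_range[of i j]
    by (auto simp: closing_cols_def intro!: bexI[of _ i])
qed

lemma neutral_rows_iff: "i \<in> neutral_rows \<longleftrightarrow> k \<le> i \<and> i \<le> r \<and> (\<exists>j. 1 \<le> j \<and> j < oc \<and> A i j = 1)"
proof
  assume "i \<in> neutral_rows"
  then obtain j where "k \<le> i" "i \<le> r" "1 \<le> j" "j < oc" "A i j \<noteq> 0"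
    by (auto simp: neutral_rows_def)
  then show "k \<le> i \<and> i \<le> r \<and> (\<exists>j. 1 \<le> j \<and> j < oc \<and> A i j = 1)" using nonzero_imp_one[of i j] by auto
next
  assume "k \<le> i \<and> i \<le> r \<and> (\<exists>j. 1 \<le> j \<and> j < oc \<and> A i j = 1)"
  then obtain j where "k \<le> i" "i \<le> r" "1 \<le> j" "j < oc" "A i j = 1" by blast
  then show "i \<in> neutral_rows" by (auto simp: neutral_rows_def intro!: bexI[of _ j])
qed

lemma oc_closing_col: "oc \<in> closing_cols" using closing_cols_iff bounds opening_col_ones by auto
lemma cc_not_closing_col: "cc \<notin> closing_cols" using closing_cols_iff closing_col_entry by auto
lemma closing_cols_bounds: "j \<in> closing_cols \<Longrightarrow> oc \<le> j \<and> j < cc"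
  using closing_cols_iff cc_not_closing_col by (cases "j = cc") auto
lemma r_neutral_row: "r \<in> neutral_rows" using neutral_rows_iff bounds closing_row_ones by auto
lemma k_not_neutral_row: "k \<notin> neutral_rows" using neutral_rows_iff opening_row_entry by auto
lemma neutral_rows_bounds: "i \<in> neutral_rows \<Longrightarrow> k < i \<and> i \<le> r"
  using neutral_rows_iff k_not_neutral_row by (cases "i = k") auto

sublocale closing: interleaved closing_cols "insert cc closing_cols" oc cc
  by unfold_locales (use oc_closing_col closing_cols_bounds in auto)

sublocale neutral: interleaved "insert k (neutral_rows - {r})" neutral_rows k r
  by unfold_locales (use bounds r_neutral_row in \<open>auto dest: neutral_rows_bounds\<close>)

lemma succ_neutral_row:
  "k \<le> i \<Longrightarrow> i < r \<Longrightarrow> succ_in neutral_rows i \<in> neutral_rows \<and> i < succ_in neutral_rows i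
    \<and> (\<forall>t\<in>neutral_rows. i < t \<longrightarrow> succ_in neutral_rows i \<le> t)"
  using succ_in_least[OF r_neutral_row, of i] by auto

definition after_dstep1 :: mat where
  "after_dstep1 = (\<lambda>i j. if i = r \<and> (j = oc \<or> j = cc) then 0 else A i j)"

definition after_dstep2 :: mat where
  "after_dstep2 = (\<lambda>i j.
     if r < i \<and> i \<le> n \<and> oc \<le> j \<and> j \<le> cc then
       (if (j \<in> closing_cols \<or> j = cc) \<and> oc < j then A i (pred_in closing_cols j) else 0)
     else after_dstep1 i j)"

definition after_dstep3 :: mat where
  "after_dstep3 = (\<lambda>i j.
     if k \<le> i \<and> i \<le> r \<and> 1 \<le> j \<and> j < oc then
       (if (i = k \<or> i \<in> neutral_rows) \<and> i < r then A (succ_in neutral_rows i) j else 0)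
     else after_dstep2 i j)"

lemma dstep1_eq: "dstep1 A A = after_dstep1"
  by (simp add: dstep1_def closing_row_eq opening_col_eq closing_col_eq after_dstep1_def)

lemma closing_cols_after_dstep1: "{j \<in> {oc..cc}. \<exists>i\<in>{r<..n}. after_dstep1 i j \<noteq> 0} = closing_cols"
  unfolding closing_cols_def after_dstep1_def by auto

lemma closing_cols_below_iff: "oc \<le> j \<Longrightarrow> (\<exists>s\<in>closing_cols. s < j) \<longleftrightarrow> oc < j"
  using oc_closing_col closing_cols_bounds by (auto intro: le_less_trans)

lemma after_dstep1_other_row: "i \<noteq> r \<Longrightarrow> after_dstep1 i j = A i j"
  by (simp add: after_dstep1_def)

lemma dstep2_eq: "dstep2 n A after_dstep1 = after_dstep2"
proof (rule ext, rule ext)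
  fix i j
  show "dstep2 n A after_dstep1 i j = after_dstep2 i j"
  proof (cases "r < i \<and> i \<le> n \<and> oc \<le> j \<and> j \<le> cc")
    case True
    have e: "(\<exists>s\<in>closing_cols. s < j) \<longleftrightarrow> oc < j"
      using closing_cols_below_iff True by simp
    have m: "after_dstep1 i (pred_in closing_cols j) = A i (pred_in closing_cols j)"
      using True by (simp add: after_dstep1_def)
    have "dstep2 n A after_dstep1 i j =
        (if (j \<in> closing_cols \<or> j = cc) \<and> (\<exists>s\<in>closing_cols. s < j)
         then after_dstep1 i (pred_in closing_cols j) else 0)"
      using True unfolding dstep2_def Let_def closing_row_eq opening_col_eq closing_col_eq
        closing_cols_after_dstep1 pred_in_def by simp
    also have "\<dots> = after_dstep2 i j" using True unfolding e m after_dstep2_def by simp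
    finally show ?thesis .
  next
    case False
    have "dstep2 n A after_dstep1 i j = after_dstep1 i j"
      unfolding dstep2_def Let_def closing_row_eq opening_col_eq closing_col_eq
      by (simp only: if_not_P[OF False])
    also have "\<dots> = after_dstep2 i j" unfolding after_dstep2_def
      by (simp only: if_not_P[OF False])
    finally show ?thesis .
  qed
qed

lemma after_dstep2_left: "i \<le> r \<Longrightarrow> j < oc \<Longrightarrow> after_dstep2 i j = A i j"
  using bounds by (simp add: after_dstep2_def after_dstep1_def)

lemma neutral_rows_after_dstep2: "{i \<in> {k..r}. \<exists>j\<in>{1..<oc}. after_dstep2 i j \<noteq> 0} = neutral_rows"
  unfolding neutral_rows_def
proof (rule Collect_cong)
  fix x
  show "(x \<in> {k..r} \<and> (\<exists>j\<in>{1..<oc}. after_dstep2 x j \<noteq> 0)) =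
      (x \<in> {k..r} \<and> (\<exists>j\<in>{1..<oc}. A x j \<noteq> 0))"
  proof (cases "x \<in> {k..r}")
    case True
    have "(\<exists>j\<in>{1..<oc}. after_dstep2 x j \<noteq> 0) = (\<exists>j\<in>{1..<oc}. A x j \<noteq> 0)"
      by (rule bex_cong) (use True after_dstep2_left in auto)
    then show ?thesis by simp
  qed blast
qed

lemma neutral_rows_above_iff: "k \<le> i \<Longrightarrow> (\<exists>t\<in>neutral_rows. i < t) \<longleftrightarrow> i < r"
  using r_neutral_row neutral_rows_bounds by (auto intro: less_le_trans)

lemma dstep3_eq: "dstep3 A after_dstep2 = after_dstep3"
proof (rule ext, rule ext)
  fix i j
  show "dstep3 A after_dstep2 i j = after_dstep3 i j"
  proof (cases "k \<le> i \<and> i \<le> r \<and> 1 \<le> j \<and> j < oc")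
    case True
    have e: "(\<exists>t\<in>neutral_rows. i < t) \<longleftrightarrow> i < r"
      using neutral_rows_above_iff True by simp
    have m: "i < r \<Longrightarrow> after_dstep2 (succ_in neutral_rows i) j = A (succ_in neutral_rows i) j"
      using True succ_neutral_row[of i] neutral_rows_bounds after_dstep2_left by auto
    have "dstep3 A after_dstep2 i j =
        (if (i = k \<or> i \<in> neutral_rows) \<and> (\<exists>t\<in>neutral_rows. i < t)
         then after_dstep2 (succ_in neutral_rows i) j else 0)"
      using True unfolding dstep3_def Let_def closing_row_eq opening_col_eq opening_row_eq
        neutral_rows_after_dstep2 succ_in_def by simp
    also have "\<dots> = after_dstep3 i j" using True m unfolding e after_dstep3_def by auto
    finally show ?thesis .
  next
    case False
    have "dstep3 A after_dstep2 i j = after_dstep2 i j"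
      unfolding dstep3_def Let_def closing_row_eq opening_col_eq opening_row_eq
      by (simp only: if_not_P[OF False])
    also have "\<dots> = after_dstep3 i j" unfolding after_dstep3_def
      by (simp only: if_not_P[OF False])
    finally show ?thesis .
  qed
qed

definition discharged :: mat where
  "discharged = (\<lambda>i j.
     if 1 \<le> j \<and> j < oc \<and> k \<le> i \<and> i \<le> r then
       (if i = k then 0
        else if i - 1 = k \<or> i - 1 \<in> neutral_rows then A (succ_in neutral_rows (i - 1)) j
        else 0)
     else if oc < j \<and> j \<le> n \<and> k + 1 \<le> i \<and> i \<le> r then
       (if i = k + 1 then 0 else A (i - 1) j)
     else if r < i \<and> i \<le> n \<and> oc \<le> j \<and> j \<le> cc then
       (if (j \<in> closing_cols \<or> j = cc) \<and> oc < j then A i (pred_in closing_cols j) else 0)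
     else if i = r \<and> (j = oc \<or> j = cc) then 0 else A i j)"

lemma after_dstep3_left: "k \<le> i \<Longrightarrow> i < r \<Longrightarrow> 1 \<le> j \<Longrightarrow> j < oc \<Longrightarrow>
    after_dstep3 i j = (if i = k \<or> i \<in> neutral_rows then A (succ_in neutral_rows i) j else 0)"
  unfolding after_dstep3_def by simp

lemma after_dstep3_other:
  assumes "\<not> (k \<le> i \<and> i \<le> r \<and> 1 \<le> j \<and> j < oc)"
  shows "after_dstep3 i j = after_dstep2 i j"
  unfolding after_dstep3_def by (simp only: if_not_P[OF assms])

lemma after_dstep2_other:
  assumes "\<not> (r < i \<and> i \<le> n \<and> oc \<le> j \<and> j \<le> cc)"
  shows "after_dstep2 i j = after_dstep1 i j"
  unfolding after_dstep2_def by (simp only: if_not_P[OF assms])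

lemma delta_eq_discharged: "delta n A = discharged"
proof (rule ext, rule ext)
  fix i j
  have D: "delta n A i j =
    (if 1 \<le> j \<and> j < oc \<and> k \<le> i \<and> i \<le> r then
       (if i = k then 0 else after_dstep3 (i - 1) j)
     else if oc < j \<and> j \<le> n \<and> k + 1 \<le> i \<and> i \<le> r then
       (if i = k + 1 then 0 else after_dstep3 (i - 1) j)
     else after_dstep3 i j)"
    unfolding delta_def dstep1_eq dstep2_eq dstep3_eq dstep4_def Let_def closing_row_eq
      opening_col_eq opening_row_eq by simp
  show "delta n A i j = discharged i j"
  proof (cases "1 \<le> j \<and> j < oc \<and> k \<le> i \<and> i \<le> r")
    case L: True
    show ?thesis
    proof (cases "i = k")
      case True
      then show ?thesis unfolding D discharged_def using L by simp
    next
      case False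
      have "after_dstep3 (i - 1) j =
          (if i - 1 = k \<or> i - 1 \<in> neutral_rows then A (succ_in neutral_rows (i - 1)) j else 0)"
        using L False by (intro after_dstep3_left) auto
      then show ?thesis unfolding D discharged_def using L False by simp
    qed
  next
    case NL: False
    show ?thesis
    proof (cases "oc < j \<and> j \<le> n \<and> k + 1 \<le> i \<and> i \<le> r")
      case R: True
      show ?thesis
      proof (cases "i = k + 1")
        case True
        then show ?thesis unfolding D discharged_def using R NL by simp
      next
        case False
        have "after_dstep3 (i - 1) j = after_dstep2 (i - 1) j"
          using R by (intro after_dstep3_other) auto
        also have "\<dots> = after_dstep1 (i - 1) j" using R by (intro after_dstep2_other) auto
        also have "\<dots> = A (i - 1) j" using R False by (intro after_dstep1_other_row) auto
        finally show ?thesis unfolding D discharged_def using R NL False by simp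
      qed
    next
      case NR: False
      have "after_dstep3 i j = after_dstep2 i j" using NL by (intro after_dstep3_other) auto
      then have "delta n A i j = after_dstep2 i j" unfolding D
        by (simp only: if_not_P[OF NL] if_not_P[OF NR])
      also have "\<dots> = discharged i j"
        unfolding after_dstep2_def after_dstep1_def discharged_def
        by (simp only: if_not_P[OF NL] if_not_P[OF NR])
      finally show ?thesis .
    qed
  qed
qed

lemma discharged_left_block:
  assumes "1 \<le> j" "j < oc" "k < i" "i \<le> r"
  shows "discharged i j =
    (if i - 1 = k \<or> i - 1 \<in> neutral_rows then A (succ_in neutral_rows (i - 1)) j else 0)"
proof -
  have c: "1 \<le> j \<and> j < oc \<and> k \<le> i \<and> i \<le> r" using assms by auto
  have ik: "i \<noteq> k" using assms by auto
  show ?thesis unfolding discharged_def by (simp only: if_P[OF c] if_not_P[OF ik])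
qed

lemma discharged_opening_row_left:
  assumes "1 \<le> j" "j < oc"
  shows "discharged k j = 0"
proof -
  have c: "1 \<le> j \<and> j < oc \<and> k \<le> k \<and> k \<le> r" using assms bounds by auto
  show ?thesis unfolding discharged_def by (simp only: if_P[OF c] if_P[OF refl])
qed

lemma discharged_right_block:
  assumes "oc < j" "j \<le> n" "k + 1 < i" "i \<le> r"
  shows "discharged i j = A (i - 1) j"
proof -
  have c0: "\<not> (1 \<le> j \<and> j < oc \<and> k \<le> i \<and> i \<le> r)" using assms by auto
  have c: "oc < j \<and> j \<le> n \<and> k + 1 \<le> i \<and> i \<le> r" using assms by auto
  have ik: "i \<noteq> k + 1" using assms by auto
  show ?thesis unfolding discharged_def by (simp only: if_not_P[OF c0] if_P[OF c] if_not_P[OF ik])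
qed

lemma discharged_after_opening_right:
  assumes "oc < j"
  shows "discharged (k + 1) j = 0"
proof (cases "j \<le> n")
  case True
  have c0: "\<not> (1 \<le> j \<and> j < oc \<and> k \<le> k + 1 \<and> k + 1 \<le> r)" using assms by auto
  have c: "oc < j \<and> j \<le> n \<and> k + 1 \<le> k + 1 \<and> k + 1 \<le> r"
    using assms True bounds by auto
  show ?thesis unfolding discharged_def by (simp only: if_not_P[OF c0] if_P[OF c] if_P[OF refl])
next
  case False
  have c0: "\<not> (1 \<le> j \<and> j < oc \<and> k \<le> k + 1 \<and> k + 1 \<le> r)" using assms by auto
  have c1: "\<not> (oc < j \<and> j \<le> n \<and> k + 1 \<le> k + 1 \<and> k + 1 \<le> r)" using False by auto
  have c2: "\<not> (r < k + 1 \<and> k + 1 \<le> n \<and> oc \<le> j \<and> j \<le> cc)"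
    using False bounds by auto
  have "A (k + 1) j = 0" using outside False by auto
  then show ?thesis unfolding discharged_def
    by (simp only: if_not_P[OF c0] if_not_P[OF c1] if_not_P[OF c2] if_cancel)
qed

lemma discharged_closing_block:
  assumes "r < i" "i \<le> n" "oc \<le> j" "j \<le> cc"
  shows "discharged i j = (if (j \<in> closing_cols \<or> j = cc) \<and> oc < j
    then A i (pred_in closing_cols j) else 0)"
proof -
  have c0: "\<not> (1 \<le> j \<and> j < oc \<and> k \<le> i \<and> i \<le> r)" using assms by auto
  have c1: "\<not> (oc < j \<and> j \<le> n \<and> k + 1 \<le> i \<and> i \<le> r)" using assms by auto
  have c: "r < i \<and> i \<le> n \<and> oc \<le> j \<and> j \<le> cc" using assms by auto
  show ?thesis unfolding discharged_def by (simp only: if_not_P[OF c0] if_not_P[OF c1] if_P[OF c])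
qed

lemma discharged_elsewhere:
  assumes "\<not> (1 \<le> j \<and> j < oc \<and> k \<le> i \<and> i \<le> r)" "\<not> (oc < j \<and> j \<le> n \<and> k + 1 \<le> i \<and> i \<le> r)"
    "\<not> (r < i \<and> i \<le> n \<and> oc \<le> j \<and> j \<le> cc)"
  shows "discharged i j = (if i = r \<and> (j = oc \<or> j = cc) then 0 else A i j)"
  unfolding discharged_def
  by (simp only: if_not_P[OF assms(1)] if_not_P[OF assms(2)] if_not_P[OF assms(3)])

lemma discharged_outer_rows: "i < k \<or> n < i \<Longrightarrow> discharged i j = A i j"
proof -
  assume a: "i < k \<or> n < i"
  have c0: "\<not> (1 \<le> j \<and> j < oc \<and> k \<le> i \<and> i \<le> r)" "\<not> (oc < j \<and> j \<le> n \<and> k + 1 \<le> i \<and> i \<le> r)"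
    "\<not> (r < i \<and> i \<le> n \<and> oc \<le> j \<and> j \<le> cc)" using a bounds by auto
  have nr: "\<not> (i = r \<and> (j = oc \<or> j = cc))" using a bounds by auto
  show ?thesis unfolding discharged_elsewhere[OF c0] by (rule if_not_P[OF nr])
qed

lemma discharged_opening_col: "discharged i oc = (if i = k then 1 else 0)"
proof (cases "r < i \<and> i \<le> n")
  case True
  then show ?thesis using discharged_closing_block[of i oc] bounds by auto
next
  case False
  have c0: "\<not> (1 \<le> oc \<and> oc < oc \<and> k \<le> i \<and> i \<le> r)" "\<not> (oc < oc \<and> oc \<le> n \<and> k + 1 \<le> i \<and> i \<le> r)"
    "\<not> (r < i \<and> i \<le> n \<and> oc \<le> oc \<and> oc \<le> cc)" using False by auto
  have "A i oc = (if i = k then 1 else 0)" if "i \<noteq> r"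
  proof -
    have "i \<noteq> d" using False bounds that by auto
    then show ?thesis using opening_col_zero[of i] bounds opening_col_ones that by auto
  qed
  then show ?thesis using discharged_elsewhere[OF c0] bounds by auto
qed

lemma discharged_opening_row: "discharged k j = (if j = oc then 1 else 0)"
proof (cases "1 \<le> j \<and> j < oc")
  case True
  then show ?thesis using discharged_opening_row_left by auto
next
  case F: False
  show ?thesis
  proof (cases "j = oc")
    case True
    then show ?thesis using discharged_opening_col by simp
  next
    case False
    have c0: "\<not> (1 \<le> j \<and> j < oc \<and> k \<le> k \<and> k \<le> r)" "\<not> (oc < j \<and> j \<le> n \<and> k + 1 \<le> k \<and> k \<le> r)"
      "\<not> (r < k \<and> k \<le> n \<and> oc \<le> j \<and> j \<le> cc)" using F bounds by auto
    have "\<not> (k = r \<and> (j = oc \<or> j = cc))" using bounds by auto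
    then show ?thesis using discharged_elsewhere[OF c0] opening_row_entry False by simp
  qed
qed

lemma discharged_outside: "\<not> (1 \<le> i \<and> i \<le> n \<and> 1 \<le> j \<and> j \<le> n) \<Longrightarrow> discharged i j = 0"
proof -
  assume a: "\<not> (1 \<le> i \<and> i \<le> n \<and> 1 \<le> j \<and> j \<le> n)"
  have c0: "\<not> (1 \<le> j \<and> j < oc \<and> k \<le> i \<and> i \<le> r)" "\<not> (oc < j \<and> j \<le> n \<and> k + 1 \<le> i \<and> i \<le> r)"
    "\<not> (r < i \<and> i \<le> n \<and> oc \<le> j \<and> j \<le> cc)" using a bounds by auto
  then show ?thesis using discharged_elsewhere[OF c0] outside[OF a] by simp
qed

lemma discharged_enclosed_one:
  assumes "k < i" "i \<le> r" "discharged i j = 1"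
  shows "(1 \<le> j \<and> j < oc \<and> (i - 1 = k \<or> i - 1 \<in> neutral_rows) \<and>
      A (succ_in neutral_rows (i - 1)) j = 1) \<or>
    (oc < j \<and> j \<le> n \<and> i \<noteq> k + 1 \<and> A (i - 1) j = 1)"
proof -
  consider "1 \<le> j \<and> j < oc" | "j = oc" | "oc < j \<and> j \<le> n" | "j = 0 \<or> n < j"
    by linarith
  then show ?thesis
  proof cases
    case 1
    then show ?thesis using discharged_left_block[of j i] assms by (auto split: if_splits)
  next
    case 2
    then show ?thesis using discharged_opening_col assms by auto
  next
    case 3
    show ?thesis
    proof (cases "i = k + 1")
      case True
      then show ?thesis using discharged_after_opening_right[of j] 3 assms by auto
    next
      case False
      then show ?thesis using discharged_right_block[of j i] 3 assms by auto
    qed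
  next
    case 4
    then show ?thesis using discharged_outside[of i j] assms by auto
  qed
qed

lemma discharged_01: "discharged i j = 0 \<or> discharged i j = 1"
proof -
  have A01: "\<And>i' j'. (i', j') \<noteq> (r, oc) \<Longrightarrow> A i' j' = 0 \<or> A i' j' = 1" using entry_01 by blast
  consider "1 \<le> j \<and> j < oc \<and> k \<le> i \<and> i \<le> r" | "oc < j \<and> j \<le> n \<and> k + 1 \<le> i \<and> i \<le> r"
    | "r < i \<and> i \<le> n \<and> oc \<le> j \<and> j \<le> cc"
    | "\<not> (1 \<le> j \<and> j < oc \<and> k \<le> i \<and> i \<le> r)" "\<not> (oc < j \<and> j \<le> n \<and> k + 1 \<le> i \<and> i \<le> r)"
      "\<not> (r < i \<and> i \<le> n \<and> oc \<le> j \<and> j \<le> cc)" by blast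
  then show ?thesis
  proof cases
    case 1
    show ?thesis
    proof (cases "i = k")
      case True then show ?thesis using discharged_opening_row_left 1 by auto
    next
      case False
      have "A (succ_in neutral_rows (i - 1)) j = 0 \<or> A (succ_in neutral_rows (i - 1)) j = 1"
        using A01 1 by auto
      then show ?thesis using discharged_left_block[of j i] 1 False by auto
    qed
  next
    case 2
    show ?thesis
    proof (cases "i = k + 1")
      case True then show ?thesis using discharged_after_opening_right 2 by auto
    next
      case False
      have "A (i - 1) j = 0 \<or> A (i - 1) j = 1" using A01 2 by auto
      then show ?thesis using discharged_right_block[of j i] 2 False by auto
    qed
  next
    case 3
    have "A i (pred_in closing_cols j) = 0 \<or> A i (pred_in closing_cols j) = 1" using A01 3 by auto
    then show ?thesis using discharged_closing_block[of i j] 3 by auto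
  next
    case 4
    show ?thesis using discharged_elsewhere[OF 4] A01[of i j] by auto
  qed
qed

lemma discharged_enclosed_row_unique:
  assumes i: "k < i" "i \<le> r" and j: "discharged i j1 = 1" "discharged i j2 = 1" "j1 < oc"
  shows "j1 = j2"
proof -
  have "i - 1 \<noteq> r" using i by auto
  obtain left: "i - 1 = k \<or> i - 1 \<in> neutral_rows" "A (succ_in neutral_rows (i - 1)) j1 = 1"
    using discharged_enclosed_one[OF i j(1)] j(3) by auto
  show ?thesis
  proof (cases "j2 < oc")
    case True
    then show ?thesis
      using discharged_enclosed_one[OF i j(2)] left j(3) left_one_unique[of j1 j2] by auto
  next
    case False
    then have right: "i \<noteq> k + 1" "oc < j2" "A (i - 1) j2 = 1"
      using discharged_enclosed_one[OF i j(2)] by auto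
    then have "i - 1 \<in> neutral_rows" using left(1) i by auto
    then obtain j' where "j' < oc" "A (i - 1) j' = 1" using neutral_rows_iff by blast
    then show ?thesis using row_one_unique[OF \<open>i - 1 \<noteq> r\<close>, of j' j2] right
      by simp
  qed
qed

lemma discharged_below_other:
  assumes "r < i" "i \<le> n" "j < oc \<or> cc < j"
  shows "discharged i j = A i j"
proof -
  have c0: "\<not> (1 \<le> j \<and> j < oc \<and> k \<le> i \<and> i \<le> r)" "\<not> (oc < j \<and> j \<le> n \<and> k + 1 \<le> i \<and> i \<le> r)"
    "\<not> (r < i \<and> i \<le> n \<and> oc \<le> j \<and> j \<le> cc)" using assms by auto
  have nr: "\<not> (i = r \<and> (j = oc \<or> j = cc))" using assms by auto
  show ?thesis unfolding discharged_elsewhere[OF c0] by (rule if_not_P[OF nr])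
qed

lemma discharged_lower_row_one_iff:
  assumes i: "r < i" "i \<le> n" and f: "A i f = 1"
  shows "discharged i j = 1 \<longleftrightarrow> j = (if f \<in> closing_cols then succ_in (insert cc closing_cols) f
    else f)"
proof -
  have one_iff: "A i g = 1 \<longleftrightarrow> g = f" for g
    using row_one_unique[of i g f] f i by auto
  have block:
    "discharged i j = 1 \<longleftrightarrow> j \<in> insert cc closing_cols \<and> oc < j \<and> pred_in closing_cols j = f"
    if "oc \<le> j" "j \<le> cc" for j
    using discharged_closing_block[OF i that] one_iff by auto
  have other: "discharged i j = 1 \<longleftrightarrow> j = f" if "\<not> (oc \<le> j \<and> j \<le> cc)" for j
    using discharged_below_other[OF i] that one_iff by auto
  show ?thesis
  proof (cases "f \<in> closing_cols")
    case True
    let ?s = "succ_in (insert cc closing_cols) f"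
    have s: "?s \<in> insert cc closing_cols" "f < ?s" "?s \<le> cc" "pred_in closing_cols ?s = f"
      using closing.succ_in_bounds[OF True] closing.pred_in_succ_in[OF True] by auto
    have "oc \<le> f" "f < cc" using closing_cols_bounds[OF True] by auto
    have "discharged i j = 1 \<longleftrightarrow> j = ?s"
    proof (cases "oc \<le> j \<and> j \<le> cc")
      case True
      then show ?thesis
        using block[of j] s \<open>oc \<le> f\<close> closing.succ_in_pred_in[of j] by auto
    next
      case False
      then show ?thesis using other[of j] s \<open>oc \<le> f\<close> \<open>f < cc\<close> by auto
    qed
    then show ?thesis using True by simp
  next
    case False
    have "f \<noteq> cc" using closing_col_entry[of i] f i by auto
    then have "\<not> (oc \<le> f \<and> f \<le> cc)" using False closing_cols_iff f i by auto
    moreover have "pred_in closing_cols j \<noteq> f" if "oc < j" for j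
      using closing.pred_in_bounds(1)[OF that] False by auto
    ultimately have "discharged i j = 1 \<longleftrightarrow> j = f"
      using block[of j] other[of j] by (cases "oc \<le> j \<and> j \<le> cc") auto
    then show ?thesis using False by simp
  qed
qed

lemma discharged_row_unique:
  assumes "discharged i j1 = 1" "discharged i j2 = 1"
  shows "j1 = j2"
proof -
  consider "i < k \<or> n < i" | "i = k" | "k < i \<and> i \<le> r" | "r < i \<and> i \<le> n"
    by linarith
  then show ?thesis
  proof cases
    case 1
    then have "A i j1 = 1" "A i j2 = 1" "i \<noteq> r" using discharged_outer_rows assms bounds by auto
    then show ?thesis using row_one_unique by blast
  next
    case 2
    then show ?thesis using discharged_opening_row assms by (auto split: if_splits)
  next
    case 3
    then consider "j1 < oc" | "j2 < oc" | "oc < j1" "oc < j2" "i \<noteq> k + 1"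
      using discharged_enclosed_one assms by metis
    then show ?thesis
    proof cases
      case 3
      then have "A (i - 1) j1 = 1" "A (i - 1) j2 = 1"
        using discharged_enclosed_one assms \<open>k < i \<and> i \<le> r\<close> by fastforce+
      then show ?thesis using row_one_unique[of "i - 1"] \<open>k < i \<and> i \<le> r\<close> by auto
    qed (use discharged_enclosed_row_unique assms \<open>k < i \<and> i \<le> r\<close> in
      \<open>metis\<close>)+
  next
    case 4
    then obtain f where "A i f = 1" using row_unit[of i] bounds by auto
    then have
      "discharged i j = 1 \<longleftrightarrow> j = (if f \<in> closing_cols then succ_in (insert cc closing_cols) f
        else f)" for j
      using discharged_lower_row_one_iff 4 by blast
    then show ?thesis using assms by simp
  qed
qed

lemma discharged_succ_col:
  assumes "j \<in> closing_cols" "r < i" "i \<le> n"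
  shows "discharged i (succ_in (insert cc closing_cols) j) = A i j"
proof -
  let ?v = "succ_in (insert cc closing_cols) j"
  have v: "?v \<in> insert cc closing_cols" "j < ?v" "?v \<le> cc" "pred_in closing_cols ?v = j"
    using closing.succ_in_bounds[OF assms(1)] closing.pred_in_succ_in[OF assms(1)] by auto
  have "oc \<le> j" using closing_cols_bounds[OF assms(1)] by simp
  then have ov: "oc < ?v" using v by simp
  have "discharged i ?v = (if (?v \<in> closing_cols \<or> ?v = cc) \<and> oc < ?v
    then A i (pred_in closing_cols ?v) else 0)"
    using discharged_closing_block[of i ?v] assms ov v by simp
  also have "\<dots> = A i j" using v ov by auto
  finally show ?thesis .
qed

lemma discharged_left_source:
  assumes j: "1 \<le> j" "j < oc" and g: "g \<in> neutral_rows"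
  shows "\<exists>i. discharged i j = A g j"
proof -
  let ?p = "pred_in (insert k (neutral_rows - {r})) g"
  have "k < g" "g \<le> r" using neutral_rows_bounds[OF g] by auto
  then have p: "?p \<in> insert k (neutral_rows - {r})" "succ_in neutral_rows ?p = g"
    using neutral.pred_in_bounds neutral.succ_in_pred_in g by auto
  moreover have "k \<le> ?p" "?p < r" using neutral.X_bounds[OF p(1)] by auto
  ultimately have "discharged (?p + 1) j = A g j" using discharged_left_block[of j "?p + 1"] j by auto
  then show ?thesis by blast
qed

lemma discharged_col_closing:
  assumes "j \<in> insert cc closing_cols" "oc < j"
  shows "\<exists>i. r < i \<and> discharged i j = 1"
proof -
  have jc: "j \<le> cc"
  proof (cases "j = cc")
    case False
    then have "j \<in> closing_cols" using assms(1) by blast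
    then show ?thesis using closing_cols_bounds[of j] by simp
  qed simp
  have pS: "pred_in closing_cols j \<in> closing_cols"
    "succ_in (insert cc closing_cols) (pred_in closing_cols j) = j"
      using closing.pred_in_bounds[OF assms(2)] closing.succ_in_pred_in[OF
      assms(1) assms(2) jc] by auto
  then obtain i where i: "r < i" "A i (pred_in closing_cols j) = 1" using closing_cols_iff by blast
  have "i \<le> n" using one_in_range[OF i(2)] by simp
  then have "discharged i j = 1" using discharged_succ_col[OF pS(1) i(1)] pS(2) i(2) by simp
  then show ?thesis using i(1) by blast
qed

lemma discharged_col_ex:
  assumes "1 \<le> j" "j \<le> n"
  shows "\<exists>i. discharged i j = 1"
proof (cases "j = oc")
  case True
  then show ?thesis using discharged_opening_col by (intro exI[of _ k]) simp
next
  case False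
  obtain g where g: "A g j = 1" using col_unit[of j] assms False by blast
  have gn: "1 \<le> g" "g \<le> n" using one_in_range[OF g] by auto
  consider "g < k" | "g = k" | "k < g \<and> g \<le> r \<and> j < oc" | "k < g \<and> g < r \<and> oc < j" |
    "g = r \<and> oc < j" | "r < g"
    using False by linarith
  then show ?thesis
  proof cases
    case 1
    then show ?thesis using discharged_outer_rows g by (intro exI[of _ g]) auto
  next
    case 2
    then show ?thesis using opening_row_entry[of j] g False by simp
  next
    case 3
    then have "g \<in> neutral_rows" using neutral_rows_iff g assms by auto
    then show ?thesis using discharged_left_source[of j g] 3 assms g by auto
  next
    case 4
    then show ?thesis
      using discharged_right_block[of j "g + 1"] g assms by (intro exI[of _ "g + 1"]) auto
  next
    case 5
    then have jc: "j = cc" using closing_row_one_iff g bounds by auto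
    then show ?thesis using discharged_col_closing[of cc] bounds by auto
  next
    case 6
    show ?thesis
    proof (cases "j < oc \<or> cc < j")
      case True
      then show ?thesis using discharged_below_other[of g j] 6 gn g by (intro exI[of _ g]) auto
    next
      case F2: False
      have "j \<noteq> cc" using closing_col_entry[of g] g 6 by auto
      then have "j \<in> closing_cols" using closing_cols_iff F2 False 6 g by auto
      then show ?thesis using discharged_col_closing[of j] F2 False by auto
    qed
  qed
qed

lemma discharged_perm_matrix: "perm_matrix n discharged"
  by (rule perm_matrixI) (use discharged_01 discharged_outside discharged_row_unique
    discharged_col_ex in blast)+

lemma discharged_after_opening_row:
  "discharged (k + 1) j = (if 1 \<le> j \<and> j < oc then A (succ_in neutral_rows k) j else 0)"
proof -
  consider "1 \<le> j \<and> j < oc" | "j = oc" | "oc < j" | "j = 0" by linarith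
  then show ?thesis
  proof cases
    case 1
    then show ?thesis using discharged_left_block[of j "k + 1"] bounds by simp
  next
    case 2
    then show ?thesis using discharged_opening_col by simp
  next
    case 3
    then show ?thesis using discharged_after_opening_right by simp
  next
    case 4
    then show ?thesis using discharged_outside by simp
  qed
qed

lemma leading_row_eq: "leading_row A = succ_in neutral_rows k"
  unfolding leading_row_def opening_row_eq opening_col_eq
proof (rule Least_equality)
  have kr: "k < r" using bounds by simp
  note nn = succ_neutral_row[OF order_refl kr]
  show "k < succ_in neutral_rows k \<and> (\<exists>j\<ge>1. j < oc \<and> A (succ_in neutral_rows k) j = 1)"
    using nn neutral_rows_iff by blast
next
  fix y assume y: "k < y \<and> (\<exists>j\<ge>1. j < oc \<and> A y j = 1)"
  have kr: "k < r" using bounds by simp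
  note nn = succ_neutral_row[OF order_refl kr]
  show "succ_in neutral_rows k \<le> y"
  proof (cases "y \<le> r")
    case True
    then have "y \<in> neutral_rows" using neutral_rows_iff y by auto
    then show ?thesis using nn y by blast
  next
    case False
    then show ?thesis using neutral_rows_bounds nn by fastforce
  qed
qed

lemma leading_col_props:
  "1 \<le> leading_col A \<and> leading_col A < oc \<and> A (succ_in neutral_rows k) (leading_col A) = 1"
proof -
  have kr: "k < r" using bounds by simp
  note nn = succ_neutral_row[OF order_refl kr]
  obtain j where j: "1 \<le> j" "j < oc" "A (succ_in neutral_rows k) j = 1"
    using nn neutral_rows_iff by blast
  have "\<exists>!j. 1 \<le> j \<and> j < oc \<and> A (succ_in neutral_rows k) j = 1"
    using j left_one_unique by blast
  then show ?thesis unfolding leading_col_def leading_row_eq opening_col_eq by (rule theI')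
qed

lemma leading_col_neutral:
  assumes "r = k + 1"
  shows "leading_col A = b"
proof -
  have "neutral_rows = {r}" using r_neutral_row neutral_rows_bounds assms by fastforce
  then have "succ_in neutral_rows k = r" using succ_neutral_row[of k] bounds by auto
  then have "leading_col A < oc" "A r (leading_col A) = 1" using leading_col_props by auto
  then show ?thesis using closing_row_one_iff bounds by auto
qed

end

section \<open>Recharging a neutral matrix\<close>

definition opening_col_of :: "mat \<Rightarrow> nat \<Rightarrow> nat" where
  "opening_col_of P k = (THE j. P k j = 1)"

definition recharge_cols :: "nat \<Rightarrow> mat \<Rightarrow> nat \<Rightarrow> nat \<Rightarrow> nat set" where
  "recharge_cols n P k oc = {j. oc < j \<and> j \<le> n \<and> (\<exists>i. k + 1 < i \<and> P i j = 1)}"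

text \<open>Inverse of the discharging procedure on neutral matrices: the closing column is the \<open>c\<close>-th
  (counting from \<open>0\<close>) column right of the opening column carrying a \<open>1\<close> below row \<open>k + 1\<close>, and
  the horizontal displacement is undone below that row.\<close>

definition recharge :: "nat \<Rightarrow> nat \<Rightarrow> mat \<Rightarrow> nat \<Rightarrow> mat" where
  "recharge n k P c = (let oc = opening_col_of P k; U = recharge_cols n P k oc;
      cc = sorted_list_of_set U ! c in
    (\<lambda>i j. if k + 1 < i \<and> i \<le> n \<and> oc \<le> j \<and> j \<le> cc then
              (if j = oc \<or> (j \<in> U \<and> j < cc) then P i (succ_in U j) else 0)
           else if i = k + 1 \<and> j = oc then -1
           else if i = k + 1 \<and> j = cc then 1 else P i j))"

lemma recharge_cols_bounds: "u \<in> recharge_cols n P k oc \<Longrightarrow> oc < u \<and> u \<le> n"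
  by (simp add: recharge_cols_def)

lemma finite_recharge_cols: "finite (recharge_cols n P k oc)"
  unfolding recharge_cols_def by (rule finite_subset[of _ "{..n}"]) auto

lemma recharge_entry:
  assumes "opening_col_of P k = oc" "sorted_list_of_set (recharge_cols n P k oc) ! c = cc"
  shows "recharge n k P c i j =
    (if k + 1 < i \<and> i \<le> n \<and> oc \<le> j \<and> j \<le> cc then
       (if j = oc \<or> (j \<in> recharge_cols n P k oc \<and> j < cc)
        then P i (succ_in (recharge_cols n P k oc) j) else 0)
     else if i = k + 1 \<and> j = oc then -1
     else if i = k + 1 \<and> j = cc then 1 else P i j)"
  using assms by (simp add: recharge_def Let_def)

context asm1_layout
begin

lemma col_sum_single:
  assumes "j \<noteq> oc" "A g j = 1" "finite I"
  shows "(\<Sum>i\<in>I. A i j) = (if g \<in> I then 1 else 0)"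
proof (rule sum_eq_one_at[of I "\<lambda>i. A i j" g])
  show "finite I" by fact
  show "A g j = 1" by fact
next
  fix i assume "i \<noteq> g"
  then have "A i j \<noteq> 1" using col_one_unique[OF assms(1)] assms(2) by blast
  then show "A i j = 0" using nonzero_imp_one[of i j] assms(1) by blast
qed

lemma cval_eq_card: "cval n A = int (card {j\<in>closing_cols. oc < j})"
proof -
  have "cval n A = (\<Sum>i\<in>{r<..n}. \<Sum>j\<in>{oc<..<cc}. A i j)"
    unfolding cval_def closing_row_eq opening_col_eq closing_col_eq by simp
  also have "\<dots> = (\<Sum>j\<in>{oc<..<cc}. \<Sum>i\<in>{r<..n}. A i j)" by (rule sum.swap)
  also have "\<dots> = (\<Sum>j\<in>{oc<..<cc}. if j \<in> closing_cols then 1 else 0)"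
  proof (rule sum.cong[OF refl])
    fix j assume j: "j \<in> {oc<..<cc}"
    then have jo: "j \<noteq> oc" "1 \<le> j" "j \<le> n" using bounds by auto
    obtain g where g: "A g j = 1" using col_unit[of j] jo by blast
    have gn: "g \<le> n" using one_in_range[OF g] by simp
    have "(\<Sum>i\<in>{r<..n}. A i j) = (if g \<in> {r<..n} then 1 else 0)"
      by (rule col_sum_single[OF jo(1) g]) simp
    moreover have "g \<in> {r<..n} \<longleftrightarrow> j \<in> closing_cols"
    proof
      assume "g \<in> {r<..n}" then show "j \<in> closing_cols" using closing_cols_iff j g by auto
    next
      assume "j \<in> closing_cols"
      then obtain i where "r < i" "A i j = 1" using closing_cols_iff by blast
      then have "i = g" using col_one_unique[OF jo(1)] g by blast
      then show "g \<in> {r<..n}" using \<open>r < i\<close> gn by simp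
    qed
    ultimately show "(\<Sum>i\<in>{r<..n}. A i j) = (if j \<in> closing_cols then 1 else 0)" by simp
  qed
  also have "\<dots> = int (card ({oc<..<cc} \<inter> closing_cols))"
    by (simp add: sum.inter_restrict[symmetric])
  also have "{oc<..<cc} \<inter> closing_cols = {j\<in>closing_cols. oc < j}"
    using closing_cols_bounds by auto
  finally show ?thesis .
qed

definition charged_cols :: "nat set" where
  "charged_cols = {j. oc < j \<and> j \<le> n \<and> (\<exists>i. k < i \<and> i < r \<and> A i j = 1)}"

lemma charge_eq_card: "charge n A = int (card charged_cols)"
proof -
  have "charge n A = (\<Sum>i\<in>{k<..<r}. \<Sum>j\<in>{oc<..n}. A i j)"
    unfolding charge_def closing_row_eq opening_col_eq opening_row_eq by simp
  also have "\<dots> = (\<Sum>j\<in>{oc<..n}. \<Sum>i\<in>{k<..<r}. A i j)" by (rule sum.swap)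
  also have "\<dots> = (\<Sum>j\<in>{oc<..n}. if j \<in> charged_cols then 1 else 0)"
  proof (rule sum.cong[OF refl])
    fix j assume j: "j \<in> {oc<..n}"
    then have jo: "j \<noteq> oc" "1 \<le> j" "j \<le> n" using bounds by auto
    obtain g where g: "A g j = 1" using col_unit[of j] jo by blast
    have "(\<Sum>i\<in>{k<..<r}. A i j) = (if g \<in> {k<..<r} then 1 else 0)"
      by (rule col_sum_single[OF jo(1) g]) simp
    moreover have "g \<in> {k<..<r} \<longleftrightarrow> j \<in> charged_cols"
    proof
      assume "g \<in> {k<..<r}" then show "j \<in> charged_cols" using j g
        unfolding charged_cols_def by auto
    next
      assume "j \<in> charged_cols"
      then obtain i where "k < i" "i < r" "A i j = 1" unfolding charged_cols_def by blast
      then have "i = g" using col_one_unique[OF jo(1)] g by blast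
      then show "g \<in> {k<..<r}" using \<open>k < i\<close> \<open>i < r\<close> by simp
    qed
    ultimately show "(\<Sum>i\<in>{k<..<r}. A i j) = (if j \<in> charged_cols then 1 else 0)"
      by simp
  qed
  also have "\<dots> = int (card ({oc<..n} \<inter> charged_cols))"
    by (simp add: sum.inter_restrict[symmetric])
  also have "{oc<..n} \<inter> charged_cols = charged_cols" unfolding charged_cols_def by auto
  finally show ?thesis .
qed

lemma discharged_neutral:
  assumes rk: "r = k + 1"
  shows "discharged i j = (if r < i \<and> i \<le> n \<and> oc \<le> j \<and> j \<le> cc then (if (j \<in> closing_cols \<or> j = cc)
    \<and> oc < j then A i (pred_in closing_cols j) else 0) else
      if i = r \<and> (j = oc \<or> j = cc) then 0 else A i j)"
proof -
  have TT1: "neutral_rows = {r}" using r_neutral_row neutral_rows_bounds rk by fastforce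
  have nk: "succ_in neutral_rows k = r"
  proof -
    have "k \<le> k" "k < r" using bounds by auto
    from succ_neutral_row[OF this] show ?thesis using TT1 by auto
  qed
  consider "1 \<le> j \<and> j < oc \<and> k \<le> i \<and> i \<le> r" | "oc < j \<and> j \<le> n \<and> k + 1 \<le> i \<and> i \<le> r"
    | "r < i \<and> i \<le> n \<and> oc \<le> j \<and> j \<le> cc"
    | "\<not> (1 \<le> j \<and> j < oc \<and> k \<le> i \<and> i \<le> r)" "\<not> (oc < j \<and> j \<le> n \<and> k + 1 \<le> i \<and> i \<le> r)"
      "\<not> (r < i \<and> i \<le> n \<and> oc \<le> j \<and> j \<le> cc)" by blast
  then show ?thesis
  proof cases
    case 1
    show ?thesis
    proof (cases "i = k")
      case True
      then show ?thesis using discharged_opening_row_left[of j] 1 opening_row_entry[of j] bounds by auto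
    next
      case False
      then have ir: "i = r" using 1 rk by auto
      have "discharged i j = A (succ_in neutral_rows k) j"
        using discharged_left_block[of j i] 1 ir rk by simp
      then show ?thesis using nk ir 1 bounds by auto
    qed
  next
    case 2
    then have ir: "i = k + 1" using rk by auto
    have "discharged i j = 0" using discharged_after_opening_right[of j] 2 ir by simp
    moreover have "A r j = 0" if "j \<noteq> cc" using closing_row_zero[of j] 2 bounds that by auto
    ultimately show ?thesis using 2 ir rk by auto
  next
    case 3
    then show ?thesis using discharged_closing_block[of i j] by simp
  next
    case 4
    then show ?thesis unfolding discharged_elsewhere[OF 4]
      by (simp only: if_not_P[OF 4(3)] if_False)
  qed
qed

lemma opening_col_of_discharged: "opening_col_of discharged k = oc"
  unfolding opening_col_of_def
  by (rule the_equality) (auto simp: discharged_opening_row split: if_splits)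

lemma recharge_cols_discharged_iff:
  assumes rk: "r = k + 1" and u: "oc < u" "u \<le> cc"
  shows "u \<in> recharge_cols n discharged k oc \<longleftrightarrow> u \<in> closing_cols \<or> u = cc"
proof
  assume "u \<in> recharge_cols n discharged k oc"
  then obtain i where i: "k + 1 < i" "discharged i u = 1" unfolding recharge_cols_def by blast
  have "i \<le> n" using discharged_outside[of i u] i(2) by fastforce
  then have
    "discharged i u = (if (u \<in> closing_cols \<or> u = cc) \<and> oc < u then A i (pred_in closing_cols u)
      else 0)"
    using discharged_closing_block[of i u] i rk u by simp
  then show "u \<in> closing_cols \<or> u = cc" using i(2) by (auto split: if_splits)
next
  assume "u \<in> closing_cols \<or> u = cc"
  then obtain i where "r < i" "discharged i u = 1" using discharged_col_closing[of u] u by blast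
  then show "u \<in> recharge_cols n discharged k oc" unfolding recharge_cols_def using u bounds rk by auto
qed

lemma interleaved_recharge_cols:
  assumes rk: "r = k + 1"
  shows "interleaved closing_cols (recharge_cols n discharged k oc) oc cc"
  by unfold_locales (use oc_closing_col closing_cols_bounds recharge_cols_discharged_iff[OF rk] in
    auto)

lemma closing_col_recharge_cols:
  assumes rk: "r = k + 1"
  shows "sorted_list_of_set (recharge_cols n discharged k oc) ! nat (cval n A) = cc"
proof -
  let ?U = "recharge_cols n discharged k oc"
  have "{x \<in> ?U. x < cc} = {j \<in> closing_cols. oc < j}"
  proof
    show "{x \<in> ?U. x < cc} \<subseteq> {j \<in> closing_cols. oc < j}"
      using recharge_cols_discharged_iff[OF rk] recharge_cols_bounds by fastforce
    show "{j \<in> closing_cols. oc < j} \<subseteq> {x \<in> ?U. x < cc}"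
      using recharge_cols_discharged_iff[OF rk] closing_cols_bounds by fastforce
  qed
  moreover have "cc \<in> ?U" using recharge_cols_discharged_iff[OF rk, of cc] bounds by simp
  ultimately show ?thesis
    using sorted_list_nth_card_less[OF finite_recharge_cols] cval_eq_card by fastforce
qed

lemma recharge_discharged:
  assumes rk: "r = k + 1"
  shows "recharge n k discharged (nat (cval n A)) = A"
proof (intro ext)
  fix i j
  let ?U = "recharge_cols n discharged k oc"
  interpret U: interleaved closing_cols ?U oc cc by (rule interleaved_recharge_cols[OF rk])
  note entry = recharge_entry[OF opening_col_of_discharged closing_col_recharge_cols[OF rk]]
  show "recharge n k discharged (nat (cval n A)) i j = A i j"
  proof (cases "k + 1 < i \<and> i \<le> n \<and> oc \<le> j \<and> j \<le> cc")
    case block: True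
    then have "j = oc \<or> (j \<in> ?U \<and> j < cc) \<longleftrightarrow> j \<in> closing_cols"
      using U.Y_iff[of j] oc_closing_col closing_cols_bounds[of j] recharge_cols_bounds[of j] by auto
    then have rech:
      "recharge n k discharged (nat (cval n A)) i j = (if j \<in> closing_cols
        then discharged i (succ_in ?U j) else 0)"
      using block by (simp add: entry)
    show ?thesis
    proof (cases "j \<in> closing_cols")
      case True
      note s = U.succ_in_bounds[OF True] U.pred_in_succ_in[OF True]
      have "oc < succ_in ?U j" using s(2) closing_cols_bounds[OF True] by simp
      then have "discharged i (succ_in ?U j) = A i j"
        using discharged_closing_block[of i "succ_in ?U j"] block rk s U.Y_iff by simp
      then show ?thesis using rech True by simp
    next
      case False
      then have "A i j \<noteq> 1" using closing_cols_iff block rk by auto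
      then show ?thesis using rech False nonzero_imp_one[of i j] block rk by auto
    qed
  next
    case False
    then have "\<not> (r < i \<and> i \<le> n \<and> oc \<le> j \<and> j \<le> cc)" using rk by simp
    then have "discharged i j = (if i = r \<and> (j = oc \<or> j = cc) then 0 else A i j)"
      unfolding discharged_neutral[OF rk] by (simp only: if_False)
    moreover have "recharge n k discharged (nat (cval n A)) i j =
        (if i = k + 1 \<and> j = oc then -1 else if i = k + 1 \<and> j = cc then 1 else discharged i j)"
      unfolding entry by (simp only: if_not_P[OF False])
    ultimately show ?thesis using neg_one closing_row_ones rk by auto
  qed
qed

end

text \<open>The hypotheses met by \<open>P = \<delta>(A)\<close> and \<open>c = c(A) + E(A)\<close> for a positive or neutral
  \<open>A\<close>; under them \<open>N\<close> is the neutral matrix with \<open>\<Delta>(N) = (k, P, c, 0)\<close>.\<close>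

locale rechargeable = perm_matrix n P
  for n :: nat and P :: mat +
  fixes k c oc b :: nat
  assumes k_pos: "1 \<le> k" and opening_one: "P k oc = 1" and after_opening_one: "P (k + 1) b = 1"
    and b_bounds: "1 \<le> b" "b < oc" and c_less: "c < card (recharge_cols n P k oc)"
begin

abbreviation lower_cols :: "nat set" where "lower_cols \<equiv> recharge_cols n P k oc"

definition cc :: nat where "cc = sorted_list_of_set lower_cols ! c"
definition X :: "nat set" where "X = insert oc {u \<in> lower_cols. u < cc}"
definition N :: mat where "N = recharge n k P c"

lemma opening_col_of_P: "opening_col_of P k = oc"
  unfolding opening_col_of_def by (rule the_equality) (use opening_one row_unique in auto)

lemma lower_cols_iff: "u \<in> lower_cols \<longleftrightarrow> oc < u \<and> u \<le> n \<and> (\<exists>i. k + 1 < i \<and> P i u = 1)"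
  unfolding recharge_cols_def by simp

lemma card_less_cc: "card {x \<in> lower_cols. x < cc} = c"
  unfolding cc_def by (rule card_less_sorted_list_nth[OF finite_recharge_cols c_less])

lemma cc_mem: "cc \<in> lower_cols"
proof -
  have "cc \<in> set (sorted_list_of_set lower_cols)"
    unfolding cc_def using c_less by (intro nth_mem) simp
  then show ?thesis using finite_recharge_cols by simp
qed

lemma cc_bounds: "oc < cc" "cc \<le> n"
  using cc_mem lower_cols_iff by auto

lemma lower_col_row:
  assumes "u \<in> lower_cols" "P i u = 1"
  shows "k + 1 < i"
proof -
  obtain g where "k + 1 < g" "P g u = 1" using assms(1) lower_cols_iff by blast
  then show ?thesis using col_unique[OF assms(2)] by simp
qed

sublocale shift: interleaved X lower_cols oc cc
proof
  show "oc \<in> X" by (simp add: X_def)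
  show "oc \<le> s \<and> s < cc" if "s \<in> X" for s
  proof (cases "s = oc")
    case False
    then have "s \<in> lower_cols" "s < cc" using that by (auto simp: X_def)
    then show ?thesis by (simp add: lower_cols_iff)
  qed (use cc_bounds in simp)
  show "u \<in> lower_cols \<longleftrightarrow> u \<in> X \<or> u = cc" if "oc < u" "u \<le> cc" for u
    using that cc_mem unfolding X_def by auto
qed

lemma N_entry: "N i j =
    (if k + 1 < i \<and> i \<le> n \<and> oc \<le> j \<and> j \<le> cc then
       (if j \<in> X then P i (succ_in lower_cols j) else 0)
     else if i = k + 1 \<and> j = oc then -1
     else if i = k + 1 \<and> j = cc then 1 else P i j)"
proof -
  have "(j = oc \<or> (j \<in> lower_cols \<and> j < cc)) \<longleftrightarrow> j \<in> X"
    by (auto simp: X_def)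
  then show ?thesis
    unfolding N_def by (simp add: recharge_entry[OF opening_col_of_P cc_def[symmetric]])
qed

lemma N_block: "k + 1 < i \<Longrightarrow> i \<le> n \<Longrightarrow> oc \<le> j \<Longrightarrow> j \<le> cc \<Longrightarrow>
    N i j = (if j \<in> X then P i (succ_in lower_cols j) else 0)"
  by (simp add: N_entry)

lemma N_other:
  assumes "\<not> (k + 1 < i \<and> i \<le> n \<and> oc \<le> j \<and> j \<le> cc)" "(i, j) \<noteq> (k + 1, oc)" "(i, j) \<noteq> (k + 1, cc)"
  shows "N i j = P i j"
proof -
  have "\<not> (i = k + 1 \<and> j = oc)" "\<not> (i = k + 1 \<and> j = cc)" using assms(2,3) by auto
  then show ?thesis by (simp only: N_entry[of i j] if_not_P[OF assms(1)] if_not_P if_False)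
qed

lemma N_left: "j < oc \<Longrightarrow> N i j = P i j"
  using cc_bounds by (intro N_other) auto

definition d :: nat where "d = (THE i. P i (succ_in lower_cols oc) = 1)"

lemma d_props: "P d (succ_in lower_cols oc) = 1" "k + 1 < d" "d \<le> n"
proof -
  have u: "succ_in lower_cols oc \<in> lower_cols" using shift.succ_in_bounds shift.min_mem by blast
  then obtain g where g: "P g (succ_in lower_cols oc) = 1" using lower_cols_iff by blast
  then show d: "P d (succ_in lower_cols oc) = 1"
    unfolding d_def by (rule theI) (use col_unique g in blast)
  show "k + 1 < d" using lower_col_row[OF u d] .
  show "d \<le> n" using one_in_range[OF d] by simp
qed

lemma N_ones: "N (k + 1) oc = -1" "N (k + 1) b = 1" "N (k + 1) cc = 1" "N k oc = 1" "N d oc = 1"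
proof -
  show "N (k + 1) oc = -1" "N (k + 1) cc = 1" using cc_bounds by (simp_all add: N_entry)
  show "N (k + 1) b = 1" using N_left[of b] b_bounds after_opening_one by simp
  show "N k oc = 1" using N_other[of k oc] opening_one by simp
  show "N d oc = 1" using N_block[of d oc] d_props cc_bounds shift.min_mem by simp
qed

lemma N_outside:
  assumes "\<not> (1 \<le> i \<and> i \<le> n \<and> 1 \<le> j \<and> j \<le> n)"
  shows "N i j = 0"
proof -
  have "k + 1 \<le> n" "1 \<le> oc" "oc < cc" "cc \<le> n" using d_props b_bounds cc_bounds by auto
  then have "N i j = P i j" using assms by (intro N_other) auto
  then show ?thesis using outside[OF assms] by simp
qed

lemma N_01: "i \<noteq> k + 1 \<Longrightarrow> N i j = 0 \<or> N i j = 1"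
  using entry_01[of i j] entry_01[of i "succ_in lower_cols j"] by (simp add: N_entry)

lemma lower_col_block_row:
  assumes "u \<in> lower_cols" "P i u = 1"
  shows "k + 1 < i \<and> i \<le> n \<and> oc < u \<and> u \<le> n"
  using lower_col_row[OF assms] one_in_range[OF assms(2)] assms(1) lower_cols_iff by auto

lemma N_lower_row_one_iff:
  assumes i: "k + 1 < i" "i \<le> n" and f: "P i f = 1"
  shows "N i j = 1 \<longleftrightarrow> j = (if oc < f \<and> f \<le> cc then pred_in X f else f)"
proof -
  have "f \<noteq> oc" using col_unique[OF opening_one] f i by auto
  have one_iff: "P i g = 1 \<longleftrightarrow> g = f" for g
    using row_unique[OF f] f by blast
  have block: "N i j = 1 \<longleftrightarrow> j \<in> X \<and> succ_in lower_cols j = f" if "oc \<le> j" "j \<le> cc" for j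
    using N_block[OF i that] one_iff by simp
  have other: "N i j = 1 \<longleftrightarrow> j = f" if "\<not> (oc \<le> j \<and> j \<le> cc)" for j
  proof -
    have "N i j = P i j" using that i by (intro N_other) auto
    then show ?thesis using one_iff by simp
  qed
  show ?thesis
  proof (cases "oc < f \<and> f \<le> cc")
    case True
    then have "f \<in> lower_cols" using lower_cols_iff i f one_in_range[OF f] by auto
    then have p: "pred_in X f \<in> X" "succ_in lower_cols (pred_in X f) = f"
      using shift.pred_in_bounds shift.succ_in_pred_in True by auto
    have "oc \<le> pred_in X f" "pred_in X f \<le> cc" using shift.X_bounds[OF p(1)] by auto
    then have "N i j = 1 \<longleftrightarrow> j = pred_in X f"
      using block[of j] other[of j] p shift.pred_in_succ_in True
      by (cases "oc \<le> j \<and> j \<le> cc") auto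
    then show ?thesis using True by simp
  next
    case False
    have "\<not> (j \<in> X \<and> succ_in lower_cols j = f)"
    proof
      assume "j \<in> X \<and> succ_in lower_cols j = f"
      then have "oc < f" "f \<le> cc"
        using shift.X_bounds[of j] shift.succ_in_bounds[of j] by fastforce+
      then show False using False by simp
    qed
    then have "N i j = 1 \<longleftrightarrow> j = f"
      using block[of j] other[of j] False \<open>f \<noteq> oc\<close>
      by (cases "oc \<le> j \<and> j \<le> cc") auto
    then show ?thesis by (simp only: if_not_P[OF False])
  qed
qed

lemma N_row_unit:
  assumes i: "1 \<le> i" "i \<le> n" "i \<noteq> k + 1"
  shows "\<exists>j. N i j = 1 \<and> (\<forall>j'. j' \<noteq> j \<longrightarrow> N i j' = 0)"
proof -
  obtain f where f: "P i f = 1" using row_ex i by blast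
  have "\<exists>g. \<forall>j. N i j = 1 \<longleftrightarrow> j = g"
  proof (cases "k + 1 < i")
    case True
    then show ?thesis using N_lower_row_one_iff[OF True i(2) f] by blast
  next
    case False
    then have "N i j = P i j" for j using i by (intro N_other) auto
    then show ?thesis using row_unique[OF f] f by metis
  qed
  then show ?thesis using N_01[OF i(3)] by metis
qed

lemma N_closing_col: "N i cc = (if i = k + 1 then 1 else 0)"
proof (cases "k + 1 < i \<and> i \<le> n")
  case True
  then show ?thesis using N_block[of i cc] cc_bounds shift.X_bounds[of cc] by auto
next
  case False
  then have "i \<noteq> k + 1 \<Longrightarrow> P i cc \<noteq> 1"
    using lower_col_block_row[OF cc_mem] by blast
  then show ?thesis using N_ones(3) N_other[of i cc] False zero_if_not_one by auto
qed

lemma X_iff: "j \<in> X \<longleftrightarrow> j = oc \<or> (j \<in> lower_cols \<and> j < cc)"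
  by (auto simp: X_def)

lemma N_col_eq:
  assumes "j \<noteq> oc" "j \<noteq> cc"
  shows "N i j = P i (if j \<in> X then succ_in lower_cols j else j)"
proof (cases "j \<in> X")
  case True
  then have j: "j \<in> lower_cols" "j < cc" using assms(1) X_iff by auto
  have s: "succ_in lower_cols j \<in> lower_cols" using shift.succ_in_bounds(1)[OF True] .
  show ?thesis
  proof (cases "k + 1 < i \<and> i \<le> n")
    case True
    moreover have "oc \<le> j" using shift.X_bounds[OF \<open>j \<in> X\<close>] by simp
    ultimately show ?thesis using N_block[of i j] j \<open>j \<in> X\<close> by simp
  next
    case False
    have "P i j = 0" "P i (succ_in lower_cols j) = 0"
      using lower_col_block_row[OF j(1)] lower_col_block_row[OF s] False zero_if_not_one by blast+
    moreover have "N i j = P i j" using False assms by (intro N_other) auto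
    ultimately show ?thesis using \<open>j \<in> X\<close> by simp
  qed
next
  case False
  show ?thesis
  proof (cases "k + 1 < i \<and> i \<le> n \<and> oc \<le> j \<and> j \<le> cc")
    case True
    have "P i j \<noteq> 1"
    proof
      assume "P i j = 1"
      then have "j \<le> n" using one_in_range by blast
      then have "j \<in> lower_cols" unfolding lower_cols_iff
        using True assms(1) \<open>P i j = 1\<close> by auto
      then show False using False True assms(2) X_iff by auto
    qed
    then show ?thesis using N_block[of i j] True False zero_if_not_one by simp
  next
    case not_block: False
    then show ?thesis using N_other[of i j] assms False by simp
  qed
qed

lemma N_col_unit:
  assumes j: "1 \<le> j" "j \<le> n" "j \<noteq> oc"
  shows "\<exists>i. N i j = 1 \<and> (\<forall>i'. i' \<noteq> i \<longrightarrow> N i' j = 0)"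
proof (cases "j = cc")
  case True
  then show ?thesis using N_closing_col by auto
next
  case False
  define j' where "j' = (if j \<in> X then succ_in lower_cols j else j)"
  have "1 \<le> j'" "j' \<le> n"
    using j shift.succ_in_bounds[of j] cc_bounds b_bounds shift.X_bounds[of j]
    by (auto simp: j'_def)
  then obtain i where i: "P i j' = 1" using col_ex by blast
  have "N i' j = P i' j'" for i' using N_col_eq[OF j(3) False] by (simp add: j'_def)
  then show ?thesis using i col_unique[OF i] zero_if_not_one by metis
qed

lemma N_layout: "asm1_layout n N k (k + 1) oc b cc d"
proof
  show "N (k + 1) j = 0" if "j \<noteq> b" "j \<noteq> oc" "j \<noteq> cc" for j
    using N_other[of "k + 1" j] that row_unique[OF after_opening_one, of j] zero_if_not_one by auto
  show "N i oc = 0" if "i \<noteq> k" "i \<noteq> k + 1" "i \<noteq> d" for i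
  proof (cases "k + 1 < i \<and> i \<le> n")
    case True
    then have "N i oc = P i (succ_in lower_cols oc)"
      using N_block[of i oc] cc_bounds shift.min_mem by simp
    then show ?thesis using col_unique[OF d_props(1)] that zero_if_not_one by metis
  next
    case False
    then have "N i oc = P i oc" using that by (intro N_other) auto
    then show ?thesis using col_unique[OF opening_one] that zero_if_not_one by metis
  qed
qed (use k_pos d_props b_bounds cc_bounds N_ones N_outside N_row_unit N_col_unit in auto)

sublocale recharged: asm1_layout n N k "k + 1" oc b cc d
  by (rule N_layout)

lemma closing_cols_N: "recharged.closing_cols = X"
proof (intro set_eqI iffI)
  fix j assume "j \<in> recharged.closing_cols"
  then obtain i where i: "oc \<le> j" "j \<le> cc" "k + 1 < i" "N i j = 1"
    using recharged.closing_cols_iff by blast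
  have "i \<le> n" using recharged.one_in_range[OF i(4)] by simp
  then have "N i j = (if j \<in> X then P i (succ_in lower_cols j) else 0)"
    using N_block i by simp
  then show "j \<in> X" using i(4) by (cases "j \<in> X") simp_all
next
  fix j assume j: "j \<in> X"
  have s: "succ_in lower_cols j \<in> lower_cols" using shift.succ_in_bounds(1)[OF j] .
  then obtain g where g: "P g (succ_in lower_cols j) = 1" using lower_cols_iff by blast
  have "k + 1 < g" "g \<le> n" using lower_col_block_row[OF s g] by auto
  moreover have "oc \<le> j" "j < cc" using shift.X_bounds[OF j] by auto
  ultimately show "j \<in> recharged.closing_cols"
    using N_block[of g j] j g recharged.closing_cols_iff by auto
qed

lemma P_lower_block:
  assumes block: "k + 1 < i" "i \<le> n" "oc \<le> j" "j \<le> cc"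
  shows "P i j = (if (j \<in> X \<or> j = cc) \<and> oc < j then N i (pred_in X j) else 0)"
proof (cases "(j \<in> X \<or> j = cc) \<and> oc < j")
  case True
  then have "j \<in> lower_cols" using shift.Y_iff block by blast
  then have p: "pred_in X j \<in> X" "succ_in lower_cols (pred_in X j) = j"
    using shift.pred_in_bounds shift.succ_in_pred_in True block by auto
  moreover have "oc \<le> pred_in X j" "pred_in X j \<le> cc" using shift.X_bounds[OF p(1)] by auto
  ultimately show ?thesis using N_block[of i "pred_in X j"] block True by simp
next
  case False
  have "P i j \<noteq> 1"
  proof
    assume P1: "P i j = 1"
    then have "j \<noteq> oc" using col_unique[OF opening_one] block by auto
    moreover have "j \<le> n" using one_in_range[OF P1] by simp
    ultimately have "j \<in> lower_cols" unfolding lower_cols_iff using P1 block by auto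
    then show False using shift.Y_iff[of j] block \<open>j \<noteq> oc\<close> False by simp
  qed
  then show ?thesis using zero_if_not_one by (simp only: if_not_P[OF False])
qed

lemma delta_N: "delta n N = P"
proof (intro ext)
  fix i j
  have delta: "delta n N i j =
    (if k + 1 < i \<and> i \<le> n \<and> oc \<le> j \<and> j \<le> cc then
       (if (j \<in> X \<or> j = cc) \<and> oc < j then N i (pred_in X j) else 0)
     else if i = k + 1 \<and> (j = oc \<or> j = cc) then 0 else N i j)"
    by (simp only: recharged.delta_eq_discharged recharged.discharged_neutral[OF refl]
        closing_cols_N)
  have "P (k + 1) oc = 0" "P (k + 1) cc = 0"
    using col_unique[OF opening_one] lower_col_row[OF cc_mem] zero_if_not_one by fastforce+
  then show "delta n N i j = P i j"
    using delta P_lower_block[of i j] N_other[of i j] by auto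
qed

lemma cval_N: "cval n N = int c"
proof -
  have "{j \<in> X. oc < j} = {x \<in> lower_cols. x < cc}"
    using cc_bounds lower_cols_iff by (auto simp: X_def)
  then show ?thesis using recharged.cval_eq_card closing_cols_N card_less_cc by simp
qed

lemma N_neutral: "neutral n N"
  unfolding neutral_def
  using recharged.asm1 recharged.opening_row_eq recharged.closing_row_eq by simp

lemma Delta_N: "Delta n N = (k, P, int c, 0)"
proof -
  have "\<not> positive n N" unfolding positive_def
    using recharged.opening_row_eq recharged.closing_row_eq by simp
  then have "Epar n N = 0" using N_neutral by (simp add: Epar_def)
  then show ?thesis
    unfolding Delta_def using recharged.opening_row_eq delta_N cval_N by simp
qed

lemma ell_N: "ell n N = (\<Sum>i\<in>{k<..n}. \<Sum>j\<in>{b<..<oc}. P i j)"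
  unfolding ell_def recharged.opening_row_eq recharged.opening_col_eq
    recharged.leading_col_neutral[OF refl]
  by (intro sum.cong refl) (simp add: N_left)

end

section \<open>The parameters and the neutralizing procedure\<close>

context asm1_layout
begin

lemma positive_iff: "positive n A \<longleftrightarrow> k + 1 < r \<and> (\<exists>j. oc < j \<and> j \<le> n \<and> A (r - 1) j = 1)"
  unfolding positive_def using asm1 opening_row_eq closing_row_eq opening_col_eq by simp

lemma neutral_iff: "neutral n A \<longleftrightarrow> r = k + 1"
  unfolding neutral_def using asm1 opening_row_eq closing_row_eq by auto

lemma negative_iff: "negative n A \<longleftrightarrow> k + 1 < r \<and> (\<exists>j. 1 \<le> j \<and> j < oc \<and> A (r - 1) j = 1)"
  unfolding negative_def using asm1 opening_row_eq closing_row_eq opening_col_eq by simp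

lemma positive_or_neutral_or_negative: "positive n A \<or> neutral n A \<or> negative n A"
proof (cases "r = k + 1")
  case True
  then show ?thesis using neutral_iff by simp
next
  case False
  then have kr: "k + 1 < r" using bounds by simp
  moreover have "1 \<le> r - 1" "r - 1 \<le> n" "r - 1 \<noteq> r" using kr bounds by auto
  then obtain f where f: "A (r - 1) f = 1" using row_unit by blast
  have "f \<noteq> oc" using opening_col_one_iff[of "r - 1"] f kr bounds by auto
  then show ?thesis using positive_iff negative_iff kr f one_in_range[OF f] by (cases "f < oc") auto
qed

lemma finite_charged_cols: "finite charged_cols"
  unfolding charged_cols_def by (rule finite_subset[of _ "{..n}"]) auto

lemma charge_pos: "positive n A \<Longrightarrow> 0 < charge n A"
proof -
  assume "positive n A"
  then obtain j where "k + 1 < r" "oc < j" "j \<le> n" "A (r - 1) j = 1" using positive_iff by blast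
  then have "j \<in> charged_cols" unfolding charged_cols_def
    by (intro CollectI conjI exI[of _ "r - 1"]) auto
  then have "card charged_cols > 0" using finite_charged_cols card_gt_0_iff by blast
  then show ?thesis using charge_eq_card by simp
qed

lemma Epar_eq_card:
  assumes "positive n A \<or> neutral n A"
  shows "Epar n A = int (card charged_cols)"
proof (cases "positive n A")
  case True
  then show ?thesis unfolding Epar_def using charge_eq_card by simp
next
  case False
  then have "neutral n A" "r = k + 1" using assms neutral_iff by auto
  then have "charged_cols = {}" unfolding charged_cols_def by auto
  then show ?thesis unfolding Epar_def using False \<open>neutral n A\<close> by simp
qed

lemma ell_nonneg: "0 \<le> ell n A"
  unfolding ell_def opening_col_eq by (intro sum_nonneg) (auto intro: nonneg)

lemma cval_nonneg: "0 \<le> cval n A"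
  using cval_eq_card by simp

lemma Epar_nonneg: "positive n A \<or> neutral n A \<Longrightarrow> 0 \<le> Epar n A"
  using Epar_eq_card by simp

lemma charged_cols_subset_recharge_cols: "charged_cols \<subseteq> recharge_cols n discharged k oc"
proof
  fix j assume "j \<in> charged_cols"
  then obtain g where g: "oc < j" "j \<le> n" "k < g" "g < r" "A g j = 1"
    unfolding charged_cols_def by blast
  then have "discharged (g + 1) j = 1" using discharged_right_block[of j "g + 1"] by simp
  then show "j \<in> recharge_cols n discharged k oc" unfolding recharge_cols_def using g by auto
qed

lemma succ_closing_col_recharge_cols:
  assumes j: "j \<in> closing_cols"
  shows "succ_in (insert cc closing_cols) j \<in> recharge_cols n discharged k oc"
proof -
  let ?v = "succ_in (insert cc closing_cols) j"
  obtain i where i: "r < i" "A i j = 1" using closing_cols_iff j by blast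
  have "discharged i ?v = 1"
    using discharged_succ_col[OF j i(1)] i one_in_range[OF i(2)] by simp
  moreover have "oc < ?v" "?v \<le> n"
    using closing.succ_in_bounds[OF j] closing_cols_bounds[OF j] bounds by auto
  moreover have "k + 1 < i" using i(1) bounds by simp
  ultimately show ?thesis unfolding recharge_cols_def by blast
qed

lemma charged_col_not_closing:
  assumes "v \<in> insert cc closing_cols"
  shows "v \<notin> charged_cols"
proof
  assume "v \<in> charged_cols"
  then obtain g where g: "oc < v" "k < g" "g < r" "A g v = 1" unfolding charged_cols_def by blast
  show False
  proof (cases "v = cc")
    case False
    then obtain i where "r < i" "A i v = 1" using assms closing_cols_iff by auto
    then show False using col_one_unique[of v g i] g by simp
  qed (use closing_col_entry[of g] g in simp)
qed

text \<open>The charged columns and the images of the closing columns under the horizontal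
  displacement are disjoint sets of columns carrying a \<open>1\<close> of \<open>\<delta>(A)\<close> below row \<open>k + 1\<close>, and the
  closing columns include \<open>oc\<close> itself; this leaves room for the closing column of a neutral
  matrix with closing-cell sum \<open>c(A) + E(A)\<close>.\<close>

lemma card_recharge_cols_gt:
  "card {j \<in> closing_cols. oc < j} + card charged_cols < card (recharge_cols n discharged k oc)"
proof -
  let ?f = "succ_in (insert cc closing_cols)"
  have fin: "finite closing_cols" unfolding closing_cols_def by auto
  have "charged_cols \<inter> ?f ` closing_cols = {}"
    using charged_col_not_closing closing.succ_in_bounds(1) by blast
  moreover have "inj_on ?f closing_cols"
    by (rule inj_on_inverseI[of _ "pred_in closing_cols"]) (rule closing.pred_in_succ_in)
  ultimately have "card (charged_cols \<union> ?f ` closing_cols) = card charged_cols + card closing_cols"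
    using card_Un_disjoint[OF finite_charged_cols finite_imageI[OF fin]] card_image by simp
  moreover have "charged_cols \<union> ?f ` closing_cols \<subseteq> recharge_cols n discharged k oc"
    using charged_cols_subset_recharge_cols succ_closing_col_recharge_cols by blast
  ultimately have "card charged_cols + card closing_cols \<le> card (recharge_cols n discharged k oc)"
    using card_mono[OF finite_recharge_cols] by metis
  moreover have "closing_cols = insert oc {j \<in> closing_cols. oc < j}"
    using oc_closing_col closing_cols_bounds by fastforce
  then have "card closing_cols = Suc (card {j \<in> closing_cols. oc < j})"
    using fin by (metis (no_types, lifting) card_insert_disjoint finite_insert mem_Collect_eq
        less_irrefl)
  ultimately show ?thesis by simp
qed

lemma discharged_col_sum_below:
  assumes j: "1 \<le> j" "j < oc"
  shows "(\<Sum>i\<in>{k<..n}. discharged i j) = (\<Sum>i\<in>{k<..n}. A i j)"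
proof -
  interpret D: perm_matrix n discharged by (rule discharged_perm_matrix)
  have jn: "j \<le> n" "j \<noteq> oc" using j bounds by auto
  obtain g where g: "A g j = 1" using col_unit[of j] jn j by blast
  obtain h where h: "discharged h j = 1" using D.col_ex jn j by blast
  have "(\<Sum>i\<in>{k<..n}. A i j) = (if g \<in> {k<..n} then 1 else 0)"
    by (rule col_sum_single[OF jn(2) g]) simp
  moreover have "(\<Sum>i\<in>{k<..n}. discharged i j) = (if h \<in> {k<..n} then 1 else 0)"
  proof (rule sum_eq_one_at)
    show "discharged i j = 0" if "i \<noteq> h" for i
      using D.col_unique[OF h] D.zero_if_not_one that by blast
  qed (use h in simp_all)
  moreover have "g \<noteq> k" "h \<noteq> k"
    using opening_row_entry[of j] discharged_opening_row[of j] g h jn by auto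
  moreover have "g < k \<longleftrightarrow> h < k"
  proof
    assume "g < k"
    then have "discharged g j = 1" using discharged_outer_rows[of g j] g by simp
    then show "h < k" using D.col_unique[OF h] \<open>g < k\<close> by simp
  next
    assume "h < k"
    then have "A h j = 1" using discharged_outer_rows[of h j] h by simp
    then show "g < k" using col_one_unique[OF jn(2) g] \<open>h < k\<close> by simp
  qed
  moreover have "g \<le> n" "h \<le> n" using one_in_range[OF g] D.one_in_range[OF h] by auto
  ultimately show ?thesis by (simp add: not_less_iff_gr_or_eq)
qed

end

lemma sum_reflect:
  fixes n p q :: nat
  assumes "q \<le> n"
  shows "(\<Sum>j\<in>{n + 1 - q<..<n + 1 - p}. f (n + 1 - j)) = (\<Sum>j\<in>{p<..<q}. f j)"
  by (rule sum.reindex_bij_witness[of _ "\<lambda>j. n + 1 - j" "\<lambda>j. n + 1 - j"])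
    (use assms in auto)

lemma recharge_Delta:
  assumes "positive n M \<or> neutral n M" and "Delta n M = (k, P, c, 0)"
  shows "M = recharge n k P (nat c)"
proof -
  have "asm1 n M" using assms(1) unfolding positive_def neutral_def by blast
  then obtain k' r oc b cc d where "asm1_layout n M k' r oc b cc d" by (rule asm1_obtain_layout)
  then interpret M: asm1_layout n M k' r oc b cc d .
  have Delta: "k' = k" "delta n M = P" "cval n M = c" "Epar n M = 0"
    using assms(2) M.opening_row_eq unfolding Delta_def by auto
  then have "\<not> positive n M" using M.charge_pos unfolding Epar_def by auto
  then have "r = k + 1" using assms(1) M.neutral_iff Delta(1) by blast
  then show ?thesis using M.recharge_discharged Delta M.delta_eq_discharged by simp
qed

context asm1_layout
begin

lemma Lambda_pn_props:
  assumes pn: "positive n A \<or> neutral n A" and L: "Lambda_pn n A = (N, E)"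
  shows "neutral n N" "ell n N = ell n A" "cval n N = cval n A + Epar n A" "E = Epar n A"
proof -
  let ?c = "card {j \<in> closing_cols. oc < j} + card charged_cols"
  have c: "cval n A + Epar n A = int ?c" using cval_eq_card Epar_eq_card[OF pn] by simp
  then have nat_c: "nat (cval n A + Epar n A) = ?c" by (simp only: nat_int)
  have lead: "1 \<le> leading_col A" "leading_col A < oc"
    "discharged (k + 1) (leading_col A) = 1"
    using leading_col_props discharged_after_opening_row[of "leading_col A"] by auto
  interpret R: rechargeable n discharged k ?c oc "leading_col A"
    by (intro rechargeable.intro rechargeable_axioms.intro discharged_perm_matrix)
      (use discharged_opening_row bounds lead card_recharge_cols_gt in auto)
  have "(positive n R.N \<or> neutral n R.N) \<and> Delta n R.N = (k, discharged, cval n A + Epar n A, 0)"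
    using R.N_neutral R.Delta_N c by simp
  moreover have "M = R.N"
    if "(positive n M \<or> neutral n M) \<and> Delta n M = (k, discharged, cval n A + Epar n A, 0)" for M
  proof -
    have "M = recharge n k discharged (nat (cval n A + Epar n A))"
      using recharge_Delta that by blast
    then show ?thesis unfolding nat_c R.N_def .
  qed
  ultimately have
    "(THE M. (positive n M \<or> neutral n M) \<and> Delta n M = (k, discharged, cval n A + Epar n A, 0))
      = R.N"
    by (rule the_equality)
  moreover have "Delta n A = (k, discharged, cval n A, Epar n A)"
    unfolding Delta_def opening_row_eq delta_eq_discharged by simp
  ultimately have "Lambda_pn n A = (R.N, Epar n A)"
    unfolding Lambda_pn_def by simp
  then have N: "N = R.N" and "E = Epar n A" using L by auto
  then show "E = Epar n A" "neutral n N" "cval n N = cval n A + Epar n A"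
    using R.N_neutral R.cval_N c by auto
  have "ell n N = (\<Sum>j\<in>{leading_col A<..<oc}. \<Sum>i\<in>{k<..n}. discharged i j)"
    unfolding N R.ell_N by (rule sum.swap)
  also have "\<dots> = (\<Sum>j\<in>{leading_col A<..<oc}. \<Sum>i\<in>{k<..n}. A i j)"
    using lead by (intro sum.cong refl discharged_col_sum_below) auto
  also have "\<dots> = ell n A"
    unfolding ell_def opening_row_eq opening_col_eq by (rule sum.swap[symmetric])
  finally show "ell n N = ell n A" .
qed

lemma refl_positive:
  assumes "negative n A"
  shows "positive n (refl n A)"
proof -
  interpret R: asm1_layout n "refl n A" k r "n + 1 - oc" "n + 1 - cc" "n + 1 - b" d
    by (rule refl_layout)
  obtain j where j: "k + 1 < r" "1 \<le> j" "j < oc" "A (r - 1) j = 1"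
    using assms negative_iff by blast
  then have "refl n A (r - 1) (n + 1 - j) = 1" "n + 1 - oc < n + 1 - j" "n + 1 - j \<le> n"
    using bounds by (auto simp: refl_entry)
  then show ?thesis using R.positive_iff j(1) by blast
qed

text \<open>For a neutral matrix the leading cell and the closing cell lie in the rows below the
  closing row, on either side of the opening column, so reflection swaps them.\<close>

lemma refl_neutral_ell_cval:
  assumes "neutral n A"
  shows "ell n (refl n A) = cval n A" "cval n (refl n A) = ell n A"
proof -
  interpret R: asm1_layout n "refl n A" k r "n + 1 - oc" "n + 1 - cc" "n + 1 - b" d
    by (rule refl_layout)
  have rk: "r = k + 1" using assms neutral_iff by simp
  have rows: "{k<..n} = insert r {r<..n}" using rk bounds by auto
  have "A r j = 0" if "b < j" "j < cc" "j \<noteq> oc" for j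
    using closing_row_zero that by simp
  then have row_r: "(\<Sum>j\<in>{p<..<q}. A r j) = 0" if "b \<le> p" "q \<le> cc" "oc \<notin> {p<..<q}" for p q
    using that by (intro sum.neutral) auto
  have refl_sum: "(\<Sum>j\<in>{n + 1 - q<..<n + 1 - p}. refl n A i j) = (\<Sum>j\<in>{p<..<q}. A i j)"
    if "1 \<le> p" "q \<le> n" for i p q
  proof -
    have "(\<Sum>j\<in>{n + 1 - q<..<n + 1 - p}. refl n A i j)
      = (\<Sum>j\<in>{n + 1 - q<..<n + 1 - p}. A i (n + 1 - j))"
      using that by (intro sum.cong refl) (auto simp: refl_entry)
    then show ?thesis using sum_reflect[where f = "A i" and p = p and q = q and n = n] that by simp
  qed
  have "ell n (refl n A) = (\<Sum>i\<in>{k<..n}. \<Sum>j\<in>{oc<..<cc}. A i j)"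
    unfolding ell_def R.opening_row_eq R.opening_col_eq R.leading_col_neutral[OF rk]
    using bounds by (intro sum.cong refl refl_sum) auto
  also have "\<dots> = cval n A"
    unfolding rows cval_def closing_row_eq opening_col_eq closing_col_eq
    using row_r[of oc cc] bounds by simp
  finally show "ell n (refl n A) = cval n A" .
  have "cval n (refl n A) = (\<Sum>i\<in>{r<..n}. \<Sum>j\<in>{b<..<oc}. A i j)"
    unfolding cval_def R.closing_row_eq R.opening_col_eq R.closing_col_eq
    using bounds by (intro sum.cong refl refl_sum) auto
  also have "\<dots> = ell n A"
    unfolding rows ell_def opening_row_eq opening_col_eq leading_col_neutral[OF rk]
    using row_r[of b oc] bounds by simp
  finally show "cval n (refl n A) = ell n A" .
qed

end

theorem lemma3:
  fixes n :: nat and A N :: mat and E :: int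
  assumes "asm1 n A"
    and "Lambda n A = (N, E)"
  shows "- ell n N \<le> Bpar n A \<and> Bpar n A \<le> cval n N"
proof -
  obtain k r oc b cc d where "asm1_layout n A k r oc b cc d"
    using asm1_obtain_layout[OF assms(1)] by blast
  then interpret asm1_layout n A k r oc b cc d .
  show ?thesis
  proof (cases "negative n A")
    case False
    then have pn: "positive n A \<or> neutral n A" using positive_or_neutral_or_negative by blast
    moreover have "Lambda_pn n A = (N, E)" using assms(2) False by (simp add: Lambda_def)
    ultimately show ?thesis
      using Lambda_pn_props ell_nonneg cval_nonneg Epar_nonneg[OF pn] False by (simp add: Bpar_def)
  next
    case True
    interpret R: asm1_layout n "refl n A" k r "n + 1 - oc" "n + 1 - cc" "n + 1 - b" d
      by (rule refl_layout)
    have pos: "positive n (refl n A)" using refl_positive[OF True] .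
    obtain M e where Me: "Lambda_pn n (refl n A) = (M, e)" by fastforce
    then have N: "N = refl n M" using assms(2) True by (simp add: Lambda_def)
    note M = R.Lambda_pn_props[OF disjI1[OF pos] Me]
    have "asm1 n M" using M(1) unfolding neutral_def by blast
    then obtain kM rM ocM bM ccM dM where "asm1_layout n M kM rM ocM bM ccM dM"
      by (rule asm1_obtain_layout)
    then have "ell n N = cval n M" "cval n N = ell n M"
      using asm1_layout.refl_neutral_ell_cval M(1) N by auto
    then show ?thesis
      using M R.ell_nonneg R.cval_nonneg R.Epar_nonneg pos True by (simp add: Bpar_def)
  qed
qed

end
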